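(* Let $(G_n)$ be a sequence of graphs with $\min_{v\in V}\delta_v=\omega(\log n)$, let $k\ge3$ be odd, $q\in(1/2,1]$ and $0\le p<p^\star_{k,q}$. Run the $(k,p,\mathcal B)$-Edge-Majority dynamics from the random initial configuration in which each node is $\mathcal R$ with probability $q$, independently. Let $q_0=q$ and $q_{t+1}=F_{p,k}(q_t)$. If $q\in(\mu_{p,k},1]$, then for all $\gamma>0$ and $K>0$, $$\Pr\big(\forall t\le n^K,\ \forall v\in V:\ \phi_v^{(t)}\in[q_t-\gamma,q_t+\gamma]\big)=1-o(1).$$
   Context: $G_n=(V,E)$, $V=\{1,\dots,n\}$, $N(u)$ neighbourhood, $\delta_u=|N(u)|$; asymptotics as $n\to\infty$. States in $\{\mathcal R,\mathcal B\}$; $R^{(t)}$ the $\mathcal R$ nodes at round $t$; $\phi_u^{(t)}=|N(u)\cap R^{(t)}|/\delta_u$. $(k,p,\mathcal B)$-Edge-Majority: in each round $t\ge1$ every node $u$ independently samples $k$ neighbours uniformly with replacement; for each sampled $v$, independently, $u$ sees $v$ as $\mathcal B$ with probability $p$ and otherwise sees $v$'s true state at round $t-1$; $u$ adopts the state seen more often. $F_{p,k}(x)=\Pr[\mathrm{Bin}(k,(1-p)x)\ge(k+1)/2]$. $p_k^\star\in[1/9,1/2)$ is the (unique) value such that for $0\le p<p_k^\star$, $F_{p,k}(x)=x$ on $[0,1]$ has exactly three solutions $0<\varphi^-_{p,k}<\varphi^+_{p,k}$; for $p=p_k^\star$ exactly two, $0$ and $\varphi_{p,k}$ (set $\varphi^-_{p_k^\star,k}=\varphi_{p_k^\star,k}$);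 for $p>p_k^\star$ only $0$. $p^\star_{k,q}=\max\{p\in[0,p_k^\star]:\varphi^-_{p,k}\le q\}$. For $0\le p<p_k^\star$, $\mu_{p,k}$ is the unique point of $(\varphi^-_{p,k},\varphi^+_{p,k})$ with $F'_{p,k}(\mu_{p,k})=1$ (so that $0\le F'_{p,k}<1$ on $(\mu_{p,k},1]$). *)

theory Defs
  imports "HOL-Probability.Probability" "HOL-Library.Landau_Symbols"
begin

text \<open>Graph sequence: E n is the adjacency relation of G_n on V = {1..n}.
 A configuration is a function nat => bool, True meaning state R (red), False meaning B.\<close>

definition nbhd :: "(nat \<Rightarrow> nat \<Rightarrow> nat \<Rightarrow> bool) \<Rightarrow> nat \<Rightarrow> nat \<Rightarrow> nat set" where
  "nbhd E n u = {v \<in> {1..n}. E n u v}"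

definition min_degree :: "(nat \<Rightarrow> nat \<Rightarrow> nat \<Rightarrow> bool) \<Rightarrow> nat \<Rightarrow> nat" where
  "min_degree E n = Min ((\<lambda>u. card (nbhd E n u)) ` {1..n})"

definition phi :: "(nat \<Rightarrow> nat \<Rightarrow> nat \<Rightarrow> bool) \<Rightarrow> nat \<Rightarrow> (nat \<Rightarrow> bool) \<Rightarrow> nat \<Rightarrow> real" where
  "phi E n x u = real (card {v \<in> nbhd E n u. x v}) / real (card (nbhd E n u))"

definition seen :: "(nat \<Rightarrow> nat \<Rightarrow> nat \<Rightarrow> bool) \<Rightarrow> nat \<Rightarrow> real \<Rightarrow> (nat \<Rightarrow> bool) \<Rightarrow> nat \<Rightarrow> bool pmf" where
  "seen E n p x u =
     bind_pmf (pmf_of_set (nbhd E n u)) (\<lambda>v.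
     bind_pmf (bernoulli_pmf p) (\<lambda>b. return_pmf (\<not> b \<and> x v)))"

definition node_update :: "(nat \<Rightarrow> nat \<Rightarrow> nat \<Rightarrow> bool) \<Rightarrow> nat \<Rightarrow> nat \<Rightarrow> real \<Rightarrow> (nat \<Rightarrow> bool) \<Rightarrow> nat \<Rightarrow> bool pmf" where
  "node_update E n k p x u =
     map_pmf (\<lambda>s. card {i \<in> {..<k}. s i} > card {i \<in> {..<k}. \<not> s i})
       (Pi_pmf {..<k} False (\<lambda>_. seen E n p x u))"

definition em_step :: "(nat \<Rightarrow> nat \<Rightarrow> nat \<Rightarrow> bool) \<Rightarrow> nat \<Rightarrow> nat \<Rightarrow> real \<Rightarrow> (nat \<Rightarrow> bool) \<Rightarrow> (nat \<Rightarrow> bool) pmf" where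
  "em_step E n k p x = Pi_pmf {1..n} False (\<lambda>u. node_update E n k p x u)"

definition init_config :: "nat \<Rightarrow> real \<Rightarrow> (nat \<Rightarrow> bool) pmf" where
  "init_config n q = Pi_pmf {1..n} False (\<lambda>_. bernoulli_pmf q)"

text \<open>Distribution of the trajectory [x_0, ..., x_T] (a list of length T+1).\<close>
fun em_traj :: "(nat \<Rightarrow> nat \<Rightarrow> nat \<Rightarrow> bool) \<Rightarrow> nat \<Rightarrow> nat \<Rightarrow> real \<Rightarrow> real \<Rightarrow> nat \<Rightarrow> (nat \<Rightarrow> bool) list pmf" where
  "em_traj E n k p q 0 = map_pmf (\<lambda>x. [x]) (init_config n q)"
| "em_traj E n k p q (Suc T) =
     bind_pmf (em_traj E n k p q T) (\<lambda>xs. map_pmf (\<lambda>y. xs @ [y]) (em_step E n k p (last xs)))"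

definition F :: "real \<Rightarrow> nat \<Rightarrow> real \<Rightarrow> real" where
  "F p k x = measure_pmf.prob (binomial_pmf k ((1 - p) * x)) {i. 2 * i \<ge> k + 1}"

definition fixpts :: "real \<Rightarrow> nat \<Rightarrow> real set" where
  "fixpts p k = {x \<in> {0..1}. F p k x = x}"

definition pstar :: "nat \<Rightarrow> real" where
  "pstar k = (THE ps. 1/9 \<le> ps \<and> ps < 1/2 \<and>
      (\<forall>p. 0 \<le> p \<and> p < ps \<longrightarrow> card (fixpts p k) = 3) \<and>
      card (fixpts ps k) = 2 \<and>
      (\<forall>p. ps < p \<and> p \<le> 1 \<longrightarrow> fixpts p k = {0}))"

definition phi_minus :: "real \<Rightarrow> nat \<Rightarrow> real" where
  "phi_minus p k = Min (fixpts p k - {0})"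

definition phi_plus :: "real \<Rightarrow> nat \<Rightarrow> real" where
  "phi_plus p k = Max (fixpts p k - {0})"

definition pstar_q :: "nat \<Rightarrow> real \<Rightarrow> real" where
  "pstar_q k q = (GREATEST p. 0 \<le> p \<and> p \<le> pstar k \<and> phi_minus p k \<le> q)"

definition mu :: "real \<Rightarrow> nat \<Rightarrow> real" where
  "mu p k = (THE x. phi_minus p k < x \<and> x < phi_plus p k \<and> deriv (F p k) x = 1)"

end

theory Submission
  imports Defs "HOL-Real_Asymp.Real_Asymp"
begin

text \<open>With \<open>k = 2m - 1\<close>, \<open>F p k x = G ((1 - p) x)\<close> where \<open>G r\<close> is the probability that a majority
  of \<open>k\<close> independent \<open>r\<close>-coins come up heads. Its derivative is proportional to \<open>(r (1 - r))\<^sup>m\<^sup>-\<^sup>1\<close>,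
  hence unimodal around \<open>1/2\<close>, and \<open>G r / r\<close> increases up to a peak \<open>r\<^sup>*\<close> and decreases after it.
  The non-zero fixed points of \<open>F p k\<close> are the points \<open>r / (1 - p)\<close> with \<open>G r / r = 1 / (1 - p)\<close>;
  this identifies \<open>p\<^sup>* = 1 - r\<^sup>* / G r\<^sup>*\<close> and shows that, for \<open>p < p\<^sup>*\<close>, \<open>F p k\<close> has slope below \<open>1\<close>
  beyond \<open>\<mu>\<close>. An orbit started above \<open>\<mu>\<close> therefore stays inside a region \<open>[L, 1]\<close> on which
  \<open>F p k\<close> is a contraction with some constant \<open>c < 1\<close>.

  In one round the new colours are independent, and the expected red fraction in the neighbourhood
  of \<open>v\<close> is the average of \<open>F p k\<close> over the neighbours' current fractions. If all fractions are
  within \<open>\<epsilon>\<close> of \<open>q\<^sub>t\<close>, this average is within \<open>c \<epsilon>\<close> of \<open>q\<^sub>t\<^sub>+\<^sub>1\<close>, and by Hoeffding's inequality the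
  actual fraction deviates from it by more than \<open>(1 - c) \<epsilon>\<close> with probability at most
  \<open>2 exp (-2 (1 - c)\<^sup>2 \<epsilon>\<^sup>2 \<delta>)\<close>. A union bound over \<open>n\<close> nodes and \<open>n\<^sup>K\<close> rounds is \<open>o(1)\<close>
  because \<open>\<delta> = \<omega>(log n)\<close>.\<close>

section \<open>The majority probability\<close>

definition binomial_tail :: "nat \<Rightarrow> nat \<Rightarrow> real \<Rightarrow> real" where
  "binomial_tail k j r = (\<Sum>i=j..k. real (k choose i) * r^i * (1-r)^(k-i))"

lemma binomial_tail_split:
  "j < k \<Longrightarrow> binomial_tail k j r = real (k choose j) * r^j * (1-r)^(k-j) + binomial_tail k (Suc j) r"
  unfolding binomial_tail_def by (simp add: sum.atLeast_Suc_atMost)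

lemma binomial_tail_has_real_derivative:
  assumes "1 \<le> j" "j \<le> k"
  shows "(binomial_tail k j has_real_derivative
           real k * real ((k-1) choose (j-1)) * r^(j-1) * (1-r)^(k-j)) (at r)"
  using assms(2)
proof (induction j rule: inc_induct)
  case base
  have "binomial_tail k k = (\<lambda>r. r^k)"
    by (simp add: binomial_tail_def fun_eq_iff)
  then show ?case
    using DERIV_pow[of k r] by simp
next
  case (step n)
  have n: "1 \<le> n" "k - n = Suc (k - Suc n)"
    using assms(1) step.hyps by auto
  have summand: "((\<lambda>r. real (k choose n) * r^n * (1-r)^(k-n)) has_real_derivative
      real (k choose n) * (real n * r^(n-1) * (1-r)^(k-n) - real (k-n) * r^n * (1-r)^(k - Suc n))) (at r)"
    unfolding n(2) by (rule derivative_eq_intros refl | simp)+ (simp add: algebra_simps)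
  have absorb1: "real (k choose n) * real n = real k * real ((k-1) choose (n-1))"
    using times_binomial_minus1_eq[of n k] n(1) by (simp flip: of_nat_mult add: mult.commute)
  have absorb2: "real (k choose n) * real (k-n) = real k * real ((k-1) choose n)"
    using binomial_absorb_comp[of k n] by (simp flip: of_nat_mult add: mult.commute)
  have "real (k choose n) * (real n * r^(n-1) * (1-r)^(k-n) - real (k-n) * r^n * (1-r)^(k - Suc n))
      + real k * real ((k-1) choose (Suc n - 1)) * r^(Suc n - 1) * (1-r)^(k - Suc n)
      = real k * real ((k-1) choose (n-1)) * r^(n-1) * (1-r)^(k-n)" (is "?lhs = _")
  proof -
    have "?lhs = (real (k choose n) * real n) * r^(n-1) * (1-r)^(k-n)
        - (real (k choose n) * real (k-n)) * r^n * (1-r)^(k - Suc n)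
        + real k * real ((k-1) choose n) * r^n * (1-r)^(k - Suc n)"
      by (simp add: algebra_simps)
    then show ?thesis
      unfolding absorb1 absorb2 by simp
  qed
  with DERIV_add[OF summand step.IH] show ?case
    by (simp add: binomial_tail_split[OF step.hyps(2)] fun_eq_iff)
qed

definition majority_prob :: "nat \<Rightarrow> real \<Rightarrow> real" where
  "majority_prob m r = binomial_tail (2*m-1) m r"

definition majority_coeff :: "nat \<Rightarrow> real" where
  "majority_coeff m = real (2*m-1) * real ((2*m-2) choose (m-1))"

definition majority_deriv :: "nat \<Rightarrow> real \<Rightarrow> real" where
  "majority_deriv m r = majority_coeff m * (r * (1-r))^(m-1)"

lemma majority_coeff_pos: "m \<ge> 1 \<Longrightarrow> majority_coeff m > 0"
  by (simp add: majority_coeff_def)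

lemma majority_prob_has_real_derivative:
  assumes "m \<ge> 1"
  shows "(majority_prob m has_real_derivative majority_deriv m r) (at r)"
proof -
  have "2*m-1-1 = 2*m-2" "2*m-1-m = m-1"
    using assms by auto
  with binomial_tail_has_real_derivative[of m "2*m-1" r] assms show ?thesis
    unfolding majority_prob_def[abs_def] majority_deriv_def majority_coeff_def
    by (simp add: power_mult_distrib mult.assoc)
qed

lemma continuous_on_majority_prob: "m \<ge> 1 \<Longrightarrow> continuous_on S (majority_prob m)"
  by (intro continuous_at_imp_continuous_on ballI DERIV_isCont[OF majority_prob_has_real_derivative])

lemma majority_prob_0: "m \<ge> 1 \<Longrightarrow> majority_prob m 0 = 0"
  unfolding majority_prob_def binomial_tail_def by (intro sum.neutral) auto

lemma majority_prob_nonneg: "0 \<le> r \<Longrightarrow> r \<le> 1 \<Longrightarrow> majority_prob m r \<ge> 0"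
  unfolding majority_prob_def binomial_tail_def by (intro sum_nonneg) auto

lemma majority_prob_symmetric:
  assumes "m \<ge> 1"
  shows "majority_prob m (1-r) = 1 - majority_prob m r"
proof -
  define k where "k = 2*m-1"
  define b where "b = (\<lambda>i. real (k choose i) * r^i * (1-r)^(k-i))"
  have "1 = (r + (1-r))^k"
    by simp
  also have "\<dots> = sum b {..k}"
    unfolding b_def by (rule binomial_ring)
  also have "{..k} = {..<m} \<union> {m..k}"
    using assms by (auto simp: k_def)
  also have "sum b \<dots> = sum b {..<m} + majority_prob m r"
    by (subst sum.union_disjoint) (auto simp: majority_prob_def binomial_tail_def b_def k_def)
  finally have total: "sum b {..<m} = 1 - majority_prob m r"
    by simp
  have "majority_prob m (1-r) = (\<Sum>i=m..k. real (k choose (k-i)) * r^(k-i) * (1-r)^(k-(k-i)))"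
    unfolding majority_prob_def binomial_tail_def k_def[symmetric]
    by (intro sum.cong) (auto simp: binomial_symmetric[symmetric] mult.commute)
  also have "\<dots> = sum b {..<m}"
    unfolding b_def by (rule sum.reindex_bij_witness[of _ "\<lambda>j. k-j" "\<lambda>i. k-i"]) (use assms in \<open>auto simp: k_def\<close>)
  finally show ?thesis
    using total by simp
qed

lemma majority_prob_le_1: "0 \<le> r \<Longrightarrow> r \<le> 1 \<Longrightarrow> m \<ge> 1 \<Longrightarrow> majority_prob m r \<le> 1"
  using majority_prob_nonneg[of "1-r" m] majority_prob_symmetric[of m r] by simp

lemma majority_prob_less_1:
  assumes "m \<ge> 1" "0 \<le> r" "r < 1"
  shows "majority_prob m r < 1"
proof -
  have "(1-r)^(2*m-1) \<le> majority_prob m (1-r)"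
    unfolding majority_prob_def binomial_tail_def
    using member_le_sum[of "2*m-1" "{m..2*m-1}" "\<lambda>i. real ((2*m-1) choose i) * (1-r)^i * (1-(1-r))^(2*m-1-i)"]
          assms by auto
  moreover have "(1-r)^(2*m-1) > 0"
    using assms by simp
  ultimately show ?thesis
    using majority_prob_symmetric[OF assms(1), of r] by linarith
qed

lemma majority_prob_1: "m \<ge> 1 \<Longrightarrow> majority_prob m 1 = 1"
  using majority_prob_symmetric[of m 1] majority_prob_0[of m] by simp

lemma majority_prob_half: "m \<ge> 1 \<Longrightarrow> majority_prob m (1/2) = 1/2"
  using majority_prob_symmetric[of m "1/2"] by simp

lemma majority_prob_mean_value:
  assumes "m \<ge> 1" "x < y"
  obtains \<xi> where "x < \<xi>" "\<xi> < y" "majority_prob m y - majority_prob m x = (y - x) * majority_deriv m \<xi>"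
  using MVT2[OF assms(2), of "majority_prob m" "majority_deriv m"] majority_prob_has_real_derivative[OF assms(1)]
  by metis

lemma majority_deriv_nonneg: "m \<ge> 1 \<Longrightarrow> 0 \<le> r \<Longrightarrow> r \<le> 1 \<Longrightarrow> majority_deriv m r \<ge> 0"
  unfolding majority_deriv_def using majority_coeff_pos[of m] by simp

lemma majority_deriv_1: "m \<ge> 2 \<Longrightarrow> majority_deriv m 1 = 0"
  unfolding majority_deriv_def by simp

text \<open>Since \<open>r (1 - r) = 1/4 - (r - 1/2)\<^sup>2\<close>, the derivative is unimodal with its peak at \<open>1/2\<close>.\<close>

lemma majority_deriv_less:
  assumes "m \<ge> 2" "0 \<le> r" "r \<le> 1" "\<bar>s - 1/2\<bar> < \<bar>r - 1/2\<bar>"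
  shows "majority_deriv m r < majority_deriv m s"
proof -
  have "(s - 1/2)^2 < (r - 1/2)^2"
    using assms(4) abs_le_square_iff[of "r - 1/2" "s - 1/2"] by linarith
  then have "r * (1-r) < s * (1-s)"
    by (simp add: power2_eq_square algebra_simps)
  moreover have "0 \<le> r * (1-r)"
    using assms(2,3) by simp
  ultimately have "(r * (1-r))^(m-1) < (s * (1-s))^(m-1)"
    using assms(1) by (intro power_strict_mono) auto
  then show ?thesis
    unfolding majority_deriv_def using majority_coeff_pos[of m] assms(1) by simp
qed

lemma majority_deriv_strict_mono:
  "m \<ge> 2 \<Longrightarrow> 0 \<le> x \<Longrightarrow> x < y \<Longrightarrow> y \<le> 1/2 \<Longrightarrow> majority_deriv m x < majority_deriv m y"
  by (rule majority_deriv_less) auto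

lemma majority_deriv_strict_antimono:
  "m \<ge> 2 \<Longrightarrow> 1/2 \<le> x \<Longrightarrow> x < y \<Longrightarrow> y \<le> 1 \<Longrightarrow> majority_deriv m y < majority_deriv m x"
  by (rule majority_deriv_less) auto

lemma majority_deriv_unimodal:
  assumes "m \<ge> 2" "0 \<le> u" "u < v" "v < w" "w \<le> 1"
  shows "min (majority_deriv m u) (majority_deriv m w) < majority_deriv m v"
proof (cases "v \<le> 1/2")
  case True
  then show ?thesis
    using majority_deriv_strict_mono[of m u v] assms by simp
next
  case False
  then show ?thesis
    using majority_deriv_strict_antimono[of m v w] assms by simp
qed

lemma majority_prob_mono:
  assumes "m \<ge> 1" "0 \<le> y" "y \<le> z" "z \<le> 1"
  shows "majority_prob m y \<le> majority_prob m z"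
proof (cases "y = z")
  case False
  then obtain \<xi> where "y < \<xi>" "\<xi> < z" "majority_prob m z - majority_prob m y = (z - y) * majority_deriv m \<xi>"
    using majority_prob_mean_value[of m y z] assms by auto
  moreover have "0 \<le> (z - y) * majority_deriv m \<xi>"
    using majority_deriv_nonneg[of m \<xi>] calculation assms by simp
  ultimately show ?thesis
    by linarith
qed simp

definition majority_tangent_gap :: "nat \<Rightarrow> real \<Rightarrow> real" where
  "majority_tangent_gap m r = r * majority_deriv m r - majority_prob m r"

lemma continuous_on_majority_tangent_gap: "m \<ge> 1 \<Longrightarrow> continuous_on S (majority_tangent_gap m)"
  unfolding majority_tangent_gap_def majority_deriv_def[abs_def]
  by (intro continuous_intros continuous_on_majority_prob)

lemma majority_tangent_gap_0: "m \<ge> 1 \<Longrightarrow> majority_tangent_gap m 0 = 0"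
  by (simp add: majority_tangent_gap_def majority_prob_0)

lemma majority_tangent_gap_1: "m \<ge> 2 \<Longrightarrow> majority_tangent_gap m 1 = -1"
  by (simp add: majority_tangent_gap_def majority_prob_1 majority_deriv_1)

text \<open>With \<open>D = majority_deriv m\<close> and a mean value point \<open>\<xi>\<close> between \<open>x\<close> and \<open>y\<close>, the gap grows by
  \<open>x (D y - D x) + (y - x) (D y - D \<xi>)\<close>, so it inherits the monotonicity of \<open>D\<close>.\<close>

lemma majority_tangent_gap_strict_mono:
  assumes "m \<ge> 2" "0 \<le> x" "x < y" "y \<le> 1/2"
  shows "majority_tangent_gap m x < majority_tangent_gap m y"
proof -
  obtain \<xi> where \<xi>: "x < \<xi>" "\<xi> < y"
    and mvt: "majority_prob m y - majority_prob m x = (y - x) * majority_deriv m \<xi>"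
    using majority_prob_mean_value[of m x y] assms by auto
  have "(y - x) * majority_deriv m \<xi> < (y - x) * majority_deriv m y"
    using majority_deriv_strict_mono[of m \<xi> y] \<xi> assms by simp
  moreover have "x * majority_deriv m x \<le> x * majority_deriv m y"
    using majority_deriv_strict_mono[of m x y] assms by (intro mult_left_mono) auto
  ultimately show ?thesis
    using mvt unfolding majority_tangent_gap_def by (simp add: algebra_simps)
qed

lemma majority_tangent_gap_strict_antimono:
  assumes "m \<ge> 2" "1/2 \<le> x" "x < y" "y \<le> 1"
  shows "majority_tangent_gap m y < majority_tangent_gap m x"
proof -
  obtain \<xi> where \<xi>: "x < \<xi>" "\<xi> < y"
    and mvt: "majority_prob m y - majority_prob m x = (y - x) * majority_deriv m \<xi>"
    using majority_prob_mean_value[of m x y] assms by auto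
  have "(y - x) * majority_deriv m y < (y - x) * majority_deriv m \<xi>"
    using majority_deriv_strict_antimono[of m \<xi> y] \<xi> assms by simp
  moreover have "x * majority_deriv m y \<le> x * majority_deriv m x"
    using majority_deriv_strict_antimono[of m x y] assms by (intro mult_left_mono) auto
  ultimately show ?thesis
    using mvt unfolding majority_tangent_gap_def by (simp add: algebra_simps)
qed

lemma majority_tangent_gap_half_pos: "m \<ge> 2 \<Longrightarrow> majority_tangent_gap m (1/2) > 0"
  using majority_tangent_gap_strict_mono[of m 0 "1/2"] majority_tangent_gap_0[of m] by simp

lemma majority_peak_exists:
  assumes "m \<ge> 2"
  shows "\<exists>r. 1/2 < r \<and> r < 1 \<and> majority_tangent_gap m r = 0"
proof -
  obtain r where r: "1/2 \<le> r" "r \<le> 1" "majority_tangent_gap m r = 0"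
    using IVT2'[of "majority_tangent_gap m" 1 0 "1/2"] continuous_on_majority_tangent_gap[of m]
          majority_tangent_gap_1[OF assms] majority_tangent_gap_half_pos[OF assms] assms by force
  moreover have "r \<noteq> 1/2" "r \<noteq> 1"
    using r(3) majority_tangent_gap_1[OF assms] majority_tangent_gap_half_pos[OF assms]
    by (metis order_less_irrefl, metis zero_neq_neg_one)
  ultimately show ?thesis
    by (intro exI[of _ r]) auto
qed

text \<open>The point where the tangent to \<open>majority_prob m\<close> passes through the origin; below it the ratio
  \<open>majority_prob m r / r\<close> increases, above it the ratio decreases.\<close>

definition majority_peak :: "nat \<Rightarrow> real" where
  "majority_peak m = (SOME r. 1/2 < r \<and> r < 1 \<and> majority_tangent_gap m r = 0)"

lemma majority_peak:
  assumes "m \<ge> 2"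
  shows "1/2 < majority_peak m" "majority_peak m < 1" "majority_tangent_gap m (majority_peak m) = 0"
  using someI_ex[OF majority_peak_exists[OF assms]] unfolding majority_peak_def by auto

lemma majority_tangent_gap_pos:
  assumes "m \<ge> 2" "0 < x" "x < majority_peak m"
  shows "majority_tangent_gap m x > 0"
proof (cases "x \<le> 1/2")
  case True
  then show ?thesis
    using majority_tangent_gap_strict_mono[of m 0 x] majority_tangent_gap_0[of m] assms by simp
next
  case False
  then show ?thesis
    using majority_tangent_gap_strict_antimono[of m x "majority_peak m"] majority_peak[OF assms(1)] assms
    by simp
qed

lemma majority_tangent_gap_neg:
  assumes "m \<ge> 2" "majority_peak m < x" "x \<le> 1"
  shows "majority_tangent_gap m x < 0"
  using majority_tangent_gap_strict_antimono[of m "majority_peak m" x] majority_peak[OF assms(1)] assms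
  by simp

definition majority_ratio :: "nat \<Rightarrow> real \<Rightarrow> real" where
  "majority_ratio m r = majority_prob m r / r"

lemma majority_ratio_has_real_derivative:
  assumes "m \<ge> 1" "r \<noteq> 0"
  shows "(majority_ratio m has_real_derivative majority_tangent_gap m r / r^2) (at r)"
proof -
  have "(majority_ratio m has_real_derivative (majority_deriv m r * r - majority_prob m r * 1) / (r * r)) (at r)"
    unfolding majority_ratio_def[abs_def]
    by (intro DERIV_divide majority_prob_has_real_derivative DERIV_ident assms)
  then show ?thesis
    by (simp add: majority_tangent_gap_def power2_eq_square algebra_simps)
qed

lemma continuous_on_majority_ratio: "m \<ge> 1 \<Longrightarrow> 0 \<notin> S \<Longrightarrow> continuous_on S (majority_ratio m)"
  unfolding majority_ratio_def[abs_def]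
  by (intro continuous_intros continuous_on_majority_prob) auto

lemma majority_ratio_strict_mono:
  assumes "m \<ge> 2" "0 < x" "x < y" "y \<le> majority_peak m"
  shows "majority_ratio m x < majority_ratio m y"
proof (rule DERIV_pos_imp_increasing_open[OF assms(3)])
  fix z assume z: "x < z" "z < y"
  show "\<exists>d. (majority_ratio m has_real_derivative d) (at z) \<and> 0 < d"
    using majority_ratio_has_real_derivative[of m z] majority_tangent_gap_pos[of m z] z assms by force
qed (use continuous_on_majority_ratio assms in auto)

lemma majority_ratio_strict_antimono:
  assumes "m \<ge> 2" "majority_peak m \<le> x" "x < y" "y \<le> 1"
  shows "majority_ratio m y < majority_ratio m x"
proof (rule DERIV_neg_imp_decreasing_open[OF assms(3)])
  fix z assume z: "x < z" "z < y"
  have "0 < z"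
    using majority_peak[OF assms(1)] assms(2) z by simp
  then show "\<exists>d. (majority_ratio m has_real_derivative d) (at z) \<and> d < 0"
    using majority_ratio_has_real_derivative[of m z] majority_tangent_gap_neg[of m z] z assms
    by (force simp: divide_neg_pos)
qed (use continuous_on_majority_ratio majority_peak[OF assms(1)] assms in auto)

lemma majority_ratio_half: "m \<ge> 1 \<Longrightarrow> majority_ratio m (1/2) = 1"
  by (simp add: majority_ratio_def majority_prob_half)

lemma majority_ratio_1: "m \<ge> 1 \<Longrightarrow> majority_ratio m 1 = 1"
  by (simp add: majority_ratio_def majority_prob_1)

lemma majority_ratio_le_inverse: "m \<ge> 1 \<Longrightarrow> 0 < r \<Longrightarrow> r \<le> 1 \<Longrightarrow> majority_ratio m r \<le> 1 / r"
  unfolding majority_ratio_def by (intro divide_right_mono majority_prob_le_1) auto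

definition majority_ratio_max :: "nat \<Rightarrow> real" where
  "majority_ratio_max m = majority_ratio m (majority_peak m)"

lemma majority_ratio_less_max:
  assumes "m \<ge> 2" "0 < r" "r \<le> 1" "r \<noteq> majority_peak m"
  shows "majority_ratio m r < majority_ratio_max m"
  unfolding majority_ratio_max_def
  using majority_ratio_strict_mono[of m r "majority_peak m"]
        majority_ratio_strict_antimono[of m "majority_peak m" r] assms
  by (cases "r < majority_peak m") auto

lemma majority_ratio_le_max: "m \<ge> 2 \<Longrightarrow> 0 < r \<Longrightarrow> r \<le> 1 \<Longrightarrow> majority_ratio m r \<le> majority_ratio_max m"
  using majority_ratio_less_max[of m r] by (cases "r = majority_peak m") (auto simp: majority_ratio_max_def)

lemma majority_ratio_max_gt_1: "m \<ge> 2 \<Longrightarrow> majority_ratio_max m > 1"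
  using majority_ratio_less_max[of m 1] majority_ratio_1[of m] majority_peak[of m] by simp

lemma majority_ratio_max_less_2:
  assumes "m \<ge> 2"
  shows "majority_ratio_max m < 2"
proof -
  note peak = majority_peak[OF assms]
  have "majority_prob m (majority_peak m) < 1"
    using majority_prob_less_1[of m "majority_peak m"] peak assms by simp
  then have "majority_prob m (majority_peak m) / majority_peak m < 1 / (1/2)"
    using majority_prob_nonneg[of "majority_peak m" m] peak by (intro frac_less) auto
  then show ?thesis
    by (simp add: majority_ratio_max_def majority_ratio_def)
qed

lemma majority_coeff_eq: "m \<ge> 1 \<Longrightarrow> majority_coeff m = real m * real ((2*m-1) choose m)"
  using times_binomial_minus1_eq[of m "2*m-1"]
  by (simp add: majority_coeff_def flip: of_nat_mult) (simp add: numeral_2_eq_2)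

lemma majority_coeff_Suc:
  assumes "m \<ge> 1"
  shows "majority_coeff (Suc m) = (4 * real m + 2) * real ((2*m-1) choose m)"
proof -
  have "(2*m) choose m = ((2*m-1) choose (m-1)) + ((2*m-1) choose m)"
    using binomial_Suc_Suc[of "2*m-1" "m-1"] assms by (simp add: Suc_diff_le)
  moreover have "(2*m-1) choose (m-1) = (2*m-1) choose m"
    using binomial_symmetric[of "m-1" "2*m-1"] assms by (simp add: Suc_diff_le)
  ultimately have "real ((2*m) choose m) = 2 * real ((2*m-1) choose m)"
    by simp
  then show ?thesis
    by (simp add: majority_coeff_def algebra_simps)
qed

text \<open>Both sides vanish at \<open>0\<close> and have the same derivative, by the two coefficient identities.\<close>

lemma majority_prob_Suc:
  assumes "m \<ge> 1"
  shows "majority_prob (Suc m) r = majority_prob m r + real ((2*m-1) choose m) * (r * (1-r))^m * (2*r - 1)"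
proof -
  define C where "C = real ((2*m-1) choose m)"
  define \<Delta> where "\<Delta> = (\<lambda>r. majority_prob (Suc m) r - majority_prob m r - C * (r * (1-r))^m * (2*r - 1))"
  have "(\<Delta> has_real_derivative 0) (at x)" for x
  proof -
    define s where "s = x * (1-x)"
    have "(\<Delta> has_real_derivative majority_deriv (Suc m) x - majority_deriv m x -
       (C * (real m * s^(m-1) * (1 - 2*x)) * (2*x-1) + C * s^m * 2)) (at x)"
      unfolding \<Delta>_def s_def using assms
      by (intro derivative_eq_intros refl) (auto intro: majority_prob_has_real_derivative)
    moreover have "s^m = s * s^(m-1)"
      using assms by (simp flip: power_Suc)
    moreover have "(1 - 2*x) * (2*x - 1) = 4 * s - 1"
      unfolding s_def by (simp add: algebra_simps power2_eq_square)
    ultimately have "(\<Delta> has_real_derivative (4 * real m + 2) * C * (s * s^(m-1)) - real m * C * s^(m-1)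
       - (C * real m * s^(m-1) * (4 * s - 1) + C * (s * s^(m-1)) * 2)) (at x)"
      unfolding majority_deriv_def majority_coeff_eq[OF assms] majority_coeff_Suc[OF assms]
        C_def[symmetric] s_def[symmetric]
      by (simp add: mult.assoc mult.left_commute)
    then show ?thesis
      by (simp add: algebra_simps)
  qed
  then have "\<Delta> r = \<Delta> 0"
    by (intro DERIV_isconst_all) blast
  then show ?thesis
    using majority_prob_0[of m] majority_prob_0[of "Suc m"] assms by (simp add: \<Delta>_def C_def zero_power)
qed

lemma majority_prob_three_quarters:
  assumes "m \<ge> 2"
  shows "majority_prob m (3/4) \<ge> 27/32"
  using assms
proof (induction m rule: dec_induct)
  case base
  show ?case
    using majority_prob_Suc[of 1 "3/4"] by (simp add: numeral_2_eq_2 majority_prob_def binomial_tail_def)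
next
  case (step m)
  have "0 \<le> real ((2*m-1) choose m) * (3/4 * (1 - 3/4))^m * (2 * (3/4) - 1)"
    by simp
  then show ?case
    using majority_prob_Suc[of m "3/4"] step by linarith
qed

lemma majority_ratio_max_ge: "m \<ge> 2 \<Longrightarrow> majority_ratio_max m \<ge> 9/8"
  using majority_ratio_le_max[of m "3/4"] majority_prob_three_quarters[of m]
  by (simp add: majority_ratio_def)

section \<open>Fixed points of \<open>F\<close> and the threshold \<open>pstar\<close>\<close>

lemma prob_binomial_pmf_ge:
  assumes "0 \<le> r" "r \<le> 1"
  shows "measure_pmf.prob (binomial_pmf k r) {i. j \<le> i} = binomial_tail k j r"
proof -
  let ?M = "binomial_pmf k r"
  have "set_pmf ?M \<subseteq> {..k}"
    using assms by (auto simp: set_pmf_binomial_eq split: if_splits)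
  then have "{i. j \<le> i} \<inter> set_pmf ?M = {j..k} \<inter> set_pmf ?M"
    by auto
  then have "measure_pmf.prob ?M {i. j \<le> i} = measure_pmf.prob ?M {j..k}"
    by (metis measure_Int_set_pmf)
  also have "\<dots> = binomial_tail k j r"
    using assms by (simp add: measure_measure_pmf_finite binomial_tail_def)
  finally show ?thesis .
qed

lemma F_eq_majority_prob:
  assumes "m \<ge> 1" "k = 2*m-1" "0 \<le> p" "p \<le> 1" "0 \<le> x" "x \<le> 1"
  shows "F p k x = majority_prob m ((1-p) * x)"
proof -
  have "{i. 2 * i \<ge> k + 1} = {i. m \<le> i}"
    using assms(1,2) by auto
  moreover have "0 \<le> (1-p) * x" "(1-p) * x \<le> 1"
    using assms(3-6) by (auto intro: mult_le_one)
  ultimately show ?thesis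
    unfolding F_def majority_prob_def assms(2) by (simp add: prob_binomial_pmf_ge)
qed

lemma fixpts_eq_image:
  assumes m: "m \<ge> 1" "k = 2*m-1" and p: "0 \<le> p" "p < 1"
  shows "fixpts p k = insert 0 ((\<lambda>r. r / (1-p)) ` {r. 0 < r \<and> r \<le> 1 \<and> majority_ratio m r = 1 / (1-p)})"
    (is "_ = insert 0 (?scale ` ?level)")
proof (intro equalityI subsetI)
  fix x assume "x \<in> fixpts p k"
  then have x: "0 \<le> x" "x \<le> 1" "majority_prob m ((1-p) * x) = x"
    using F_eq_majority_prob[OF m, of p x] p unfolding fixpts_def by auto
  show "x \<in> insert 0 (?scale ` ?level)"
  proof (cases "x = 0")
    case False
    then have "(1-p) * x \<in> ?level"
      using x p by (auto simp: majority_ratio_def intro: mult_le_one)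
    then show ?thesis
      using p by (intro insertI2 image_eqI[of x _ "(1-p) * x"]) auto
  qed simp
next
  fix x assume "x \<in> insert 0 (?scale ` ?level)"
  then consider "x = 0" | r where "r \<in> ?level" "x = r / (1-p)"
    by blast
  then show "x \<in> fixpts p k"
  proof cases
    case 1
    then show ?thesis
      using F_eq_majority_prob[OF m, of p 0] majority_prob_0[OF m(1)] p by (simp add: fixpts_def)
  next
    case 2
    have "0 < r"
      using 2 by simp
    then have "majority_prob m r = r * majority_ratio m r"
      by (simp add: majority_ratio_def)
    also have "\<dots> = x"
      using 2 by simp
    finally have G: "majority_prob m r = x" .
    then have "0 \<le> x" "x \<le> 1"
      using 2 majority_prob_nonneg[of r m] majority_prob_le_1[of r m] m by auto
    then show ?thesis
      using F_eq_majority_prob[OF m, of p x] 2 p G by (simp add: fixpts_def)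
  qed
qed

lemma majority_ratio_level_set_below_max:
  assumes m: "m \<ge> 2" and y: "1 \<le> y" "y < majority_ratio_max m"
  obtains r1 r2 where "1/2 \<le> r1" "r1 < majority_peak m" "majority_peak m < r2" "r2 \<le> 1"
    "{r. 0 < r \<and> r \<le> 1 \<and> majority_ratio m r = y} = {r1, r2}"
proof -
  note peak = majority_peak[OF m]
  have cont: "continuous_on {a..b} (majority_ratio m)" if "0 < a" for a b
    using continuous_on_majority_ratio[of m "{a..b}"] m that by auto
  obtain r1 where r1: "1/2 \<le> r1" "r1 \<le> majority_peak m" "majority_ratio m r1 = y"
    using IVT'[of "majority_ratio m" "1/2" y "majority_peak m"] cont[of "1/2"] peak y m
    by (auto simp: majority_ratio_half majority_ratio_max_def)
  obtain r2 where r2: "majority_peak m \<le> r2" "r2 \<le> 1" "majority_ratio m r2 = y"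
    using IVT2'[of "majority_ratio m" 1 y "majority_peak m"] cont[of "majority_peak m"] peak y m
    by (auto simp: majority_ratio_1 majority_ratio_max_def)
  have r1_neq: "r1 \<noteq> majority_peak m" and r2_neq: "r2 \<noteq> majority_peak m"
    using r1 r2 y by (auto simp: majority_ratio_max_def)
  have "r = r1 \<or> r = r2" if r: "0 < r" "r \<le> 1" "majority_ratio m r = y" for r
  proof (cases "r \<le> majority_peak m")
    case True
    then show ?thesis
      using majority_ratio_strict_mono[OF m, of r r1] majority_ratio_strict_mono[OF m, of r1 r] r r1
      by (cases r r1 rule: linorder_cases) auto
  next
    case False
    then show ?thesis
      using majority_ratio_strict_antimono[OF m, of r r2] majority_ratio_strict_antimono[OF m, of r2 r] r r2
      by (cases r r2 rule: linorder_cases) auto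
  qed
  then have "{r. 0 < r \<and> r \<le> 1 \<and> majority_ratio m r = y} = {r1, r2}"
    using r1 r2 peak by auto
  with r1 r2 r1_neq r2_neq show ?thesis
    by (intro that) auto
qed

lemma majority_ratio_level_set_max:
  "m \<ge> 2 \<Longrightarrow> {r. 0 < r \<and> r \<le> 1 \<and> majority_ratio m r = majority_ratio_max m} = {majority_peak m}"
  using majority_ratio_less_max[of m] majority_peak[of m] by (force simp: majority_ratio_max_def)

lemma majority_ratio_level_set_above_max:
  "m \<ge> 2 \<Longrightarrow> majority_ratio_max m < y \<Longrightarrow> {r. 0 < r \<and> r \<le> 1 \<and> majority_ratio m r = y} = {}"
  using majority_ratio_le_max[of m] by force

definition majority_pstar :: "nat \<Rightarrow> real" where
  "majority_pstar m = 1 - 1 / majority_ratio_max m"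

lemma majority_pstar_bounds: "m \<ge> 2 \<Longrightarrow> 1/9 \<le> majority_pstar m \<and> majority_pstar m < 1/2"
  using majority_ratio_max_ge[of m] majority_ratio_max_less_2[of m]
  by (simp add: majority_pstar_def field_simps)

lemma fixpts_below_pstar:
  assumes m: "m \<ge> 2" "k = 2*m-1" and p: "0 \<le> p" "p < majority_pstar m"
  obtains x1 x2 where "1/2 \<le> x1" "x1 < x2" "fixpts p k = {0, x1, x2}"
proof -
  have M: "majority_ratio_max m > 1"
    by (rule majority_ratio_max_gt_1[OF m(1)])
  have p1: "p < 1"
    using p majority_pstar_bounds[OF m(1)] by simp
  have "1 \<le> 1 / (1-p)" "1 / (1-p) < majority_ratio_max m"
    using p p1 M by (auto simp: majority_pstar_def field_simps)
  then obtain r1 r2 where r: "1/2 \<le> r1" "r1 < majority_peak m" "majority_peak m < r2"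
    and level: "{r. 0 < r \<and> r \<le> 1 \<and> majority_ratio m r = 1 / (1-p)} = {r1, r2}"
    by (rule majority_ratio_level_set_below_max[OF m(1)])
  have "r1 \<le> r1 / (1-p)"
    using r p p1 by (simp add: field_simps mult_left_le)
  moreover have "r1 / (1-p) < r2 / (1-p)"
    using r p1 by (simp add: divide_strict_right_mono)
  moreover have "fixpts p k = {0, r1 / (1-p), r2 / (1-p)}"
    using fixpts_eq_image[of m k p] level m p p1 by simp
  ultimately show ?thesis
    using r(1) by (intro that[of "r1 / (1-p)" "r2 / (1-p)"]) linarith+
qed

lemma fixpts_at_pstar:
  assumes "m \<ge> 2" "k = 2*m-1"
  shows "fixpts (majority_pstar m) k = {0, majority_peak m * majority_ratio_max m}"
  using fixpts_eq_image[of m k "majority_pstar m"] majority_ratio_level_set_max[of m]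
        majority_pstar_bounds[of m] majority_ratio_max_gt_1[of m] assms
  by (simp add: majority_pstar_def)

lemma fixpts_above_pstar:
  assumes m: "m \<ge> 2" "k = 2*m-1" and p: "majority_pstar m < p" "p \<le> 1"
  shows "fixpts p k = {0}"
proof (cases "p = 1")
  case True
  then show ?thesis
    using F_eq_majority_prob[of m k 1] majority_prob_0[of m] m by (auto simp: fixpts_def)
next
  case False
  have "majority_ratio_max m < 1 / (1-p)"
    using p False majority_ratio_max_gt_1[OF m(1)] by (auto simp: majority_pstar_def field_simps)
  then show ?thesis
    using fixpts_eq_image[of m k p] majority_ratio_level_set_above_max[OF m(1)] m p False
          majority_pstar_bounds[OF m(1)] by simp
qed

lemma card_fixpts_below_pstar:
  assumes "m \<ge> 2" "k = 2*m-1" "0 \<le> p" "p < majority_pstar m"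
  shows "card (fixpts p k) = 3"
proof -
  obtain x1 x2 where "1/2 \<le> x1" "x1 < x2" "fixpts p k = {0, x1, x2}"
    using fixpts_below_pstar[OF assms] .
  then show ?thesis
    by simp
qed

lemma card_fixpts_at_pstar: "m \<ge> 2 \<Longrightarrow> k = 2*m-1 \<Longrightarrow> card (fixpts (majority_pstar m) k) = 2"
  using fixpts_at_pstar[of m k] majority_peak[of m] majority_ratio_max_gt_1[of m] by simp

lemma pstar_eq_majority_pstar:
  assumes m: "m \<ge> 2" "k = 2*m-1"
  shows "pstar k = majority_pstar m"
  unfolding pstar_def
proof (rule the_equality)
  show "1/9 \<le> majority_pstar m \<and> majority_pstar m < 1/2 \<and>
      (\<forall>p. 0 \<le> p \<and> p < majority_pstar m \<longrightarrow> card (fixpts p k) = 3) \<and>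
      card (fixpts (majority_pstar m) k) = 2 \<and>
      (\<forall>p. majority_pstar m < p \<and> p \<le> 1 \<longrightarrow> fixpts p k = {0})"
    using majority_pstar_bounds[OF m(1)] card_fixpts_below_pstar[OF m] card_fixpts_at_pstar[OF m]
      fixpts_above_pstar[OF m] by blast
next
  fix ps assume ps: "1/9 \<le> ps \<and> ps < 1/2 \<and>
      (\<forall>p. 0 \<le> p \<and> p < ps \<longrightarrow> card (fixpts p k) = 3) \<and>
      card (fixpts ps k) = 2 \<and>
      (\<forall>p. ps < p \<and> p \<le> 1 \<longrightarrow> fixpts p k = {0})"
  show "ps = majority_pstar m"
  proof (rule ccontr)
    assume "ps \<noteq> majority_pstar m"
    then consider "ps < majority_pstar m" | "majority_pstar m < ps"
      by linarith
    then show False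
    proof cases
      case 1
      define p where "p = (ps + majority_pstar m) / 2"
      have "ps < p" "p < majority_pstar m" "0 \<le> p" "p \<le> 1"
        using 1 ps majority_pstar_bounds[OF m(1)] by (auto simp: p_def)
      then have "card (fixpts p k) = 3" "fixpts p k = {0}"
        using ps card_fixpts_below_pstar[OF m] by auto
      then show False
        by simp
    next
      case 2
      then have "card (fixpts (majority_pstar m) k) = 3"
        using ps majority_pstar_bounds[OF m(1)] by auto
      then show False
        using card_fixpts_at_pstar[OF m] by simp
    qed
  qed
qed

lemma fixpts_ge_half:
  assumes m: "m \<ge> 2" "k = 2*m-1" and p: "0 \<le> p" "p < 1" and x: "x \<in> fixpts p k" "x \<noteq> 0"
  shows "1/2 \<le> x"
proof -
  obtain r where r: "0 < r" "r \<le> 1" "majority_ratio m r = 1 / (1-p)" "x = r / (1-p)"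
    using x fixpts_eq_image[of m k p] m p by auto
  have "\<not> r < 1/2"
  proof
    assume "r < 1/2"
    then have "majority_ratio m r < 1"
      using majority_ratio_strict_mono[OF m(1) r(1), of "1/2"] majority_ratio_half[of m] majority_peak[OF m(1)] m(1)
      by simp
    moreover have "1 \<le> 1 / (1-p)"
      using p by simp
    ultimately show False
      using r(3) by linarith
  qed
  moreover have "r \<le> r / (1-p)"
    using r(1) p by (simp add: field_simps mult_left_le)
  ultimately show ?thesis
    using r(4) by linarith
qed

lemma phi_minus_mem_fixpts:
  assumes m: "m \<ge> 2" "k = 2*m-1" and p: "0 \<le> p" "p \<le> majority_pstar m"
  shows "phi_minus p k \<in> fixpts p k - {0}"
    and "x \<in> fixpts p k - {0} \<Longrightarrow> phi_minus p k \<le> x"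
proof -
  have "finite (fixpts p k) \<and> fixpts p k - {0} \<noteq> {}"
  proof (cases "p = majority_pstar m")
    case True
    then show ?thesis
      using fixpts_at_pstar[OF m] majority_peak[OF m(1)] majority_ratio_max_gt_1[OF m(1)] by simp
  next
    case False
    then obtain x1 x2 where "1/2 \<le> x1" "fixpts p k = {0, x1, x2}"
      using fixpts_below_pstar[OF m p(1)] p(2) by (metis order_le_less)
    then show ?thesis
      by auto
  qed
  then show "phi_minus p k \<in> fixpts p k - {0}" "x \<in> fixpts p k - {0} \<Longrightarrow> phi_minus p k \<le> x"
    unfolding phi_minus_def by (metis Min_in finite_Diff, simp)
qed

lemma compact_GreatestI:
  fixes P :: "real \<Rightarrow> bool"
  assumes "compact {x. P x}" "P a"
  shows "P (GREATEST x. P x)"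
proof -
  obtain s where "P s" "\<forall>t. P t \<longrightarrow> t \<le> s"
    using compact_attains_sup[OF assms(1)] assms(2) by auto
  then show ?thesis
    by (metis GreatestI2_order)
qed

lemma pstar_q_set_eq_projection:
  assumes m: "m \<ge> 2" "k = 2*m-1" and q: "1/2 < q" "q \<le> 1"
  shows "{p. 0 \<le> p \<and> p \<le> pstar k \<and> phi_minus p k \<le> q} =
    fst ` (({0..majority_pstar m} \<times> {1/2..q}) \<inter> {z. majority_prob m ((1 - fst z) * snd z) = snd z})"
    (is "_ = fst ` ?C")
proof (intro equalityI subsetI)
  have fixpt_iff: "F p k x = x \<longleftrightarrow> majority_prob m ((1-p) * x) = x"
    if "0 \<le> p" "p \<le> majority_pstar m" "0 \<le> x" "x \<le> 1" for p x
    using F_eq_majority_prob[OF _ m(2), of p x] that m majority_pstar_bounds[OF m(1)] by simp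
  {
    fix p assume "p \<in> {p. 0 \<le> p \<and> p \<le> pstar k \<and> phi_minus p k \<le> q}"
    then have p: "0 \<le> p" "p \<le> majority_pstar m" "phi_minus p k \<le> q"
      using pstar_eq_majority_pstar[OF m] by auto
    have "phi_minus p k \<in> fixpts p k - {0}"
      by (rule phi_minus_mem_fixpts(1)[OF m p(1,2)])
    moreover have "1/2 \<le> phi_minus p k"
      using fixpts_ge_half[OF m p(1)] calculation p majority_pstar_bounds[OF m(1)] by auto
    ultimately have "(p, phi_minus p k) \<in> ?C"
      using p fixpt_iff[OF p(1,2)] by (auto simp: fixpts_def)
    then show "p \<in> fst ` ?C"
      by force
  next
    fix p assume "p \<in> fst ` ?C"
    then obtain x where p: "0 \<le> p" "p \<le> majority_pstar m" and x: "1/2 \<le> x" "x \<le> q"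
      and G: "majority_prob m ((1-p) * x) = x"
      by auto
    then have "x \<in> fixpts p k - {0}"
      using fixpt_iff[OF p, of x] q by (auto simp: fixpts_def)
    then show "p \<in> {p. 0 \<le> p \<and> p \<le> pstar k \<and> phi_minus p k \<le> q}"
      using phi_minus_mem_fixpts(2)[OF m p] pstar_eq_majority_pstar[OF m] p x by force
  }
qed

lemma compact_pstar_q_set:
  assumes "m \<ge> 2" "k = 2*m-1" "1/2 < q" "q \<le> 1"
  shows "compact {p. 0 \<le> p \<and> p \<le> pstar k \<and> phi_minus p k \<le> q}"
proof -
  have "continuous_on UNIV (\<lambda>z::real \<times> real. majority_prob m ((1 - fst z) * snd z))"
    using assms(1) by (intro continuous_on_compose2[OF continuous_on_majority_prob] continuous_intros) auto
  then have "compact (({0..majority_pstar m} \<times> {1/2..q}) \<inter> {z. majority_prob m ((1 - fst z) * snd z) = snd z})"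
    by (intro compact_Int_closed compact_Times compact_Icc closed_Collect_eq continuous_intros)
  then show ?thesis
    unfolding pstar_q_set_eq_projection[OF assms]
    using compact_continuous_image[OF continuous_on_fst[OF continuous_on_id]] by simp
qed

text \<open>\<open>GREATEST\<close> in \<open>pstar_q\<close> is only meaningful if the maximum exists; it does, as the set is compact.\<close>

lemma pstar_q_le_majority_pstar:
  assumes m: "m \<ge> 2" "k = 2*m-1" and q: "1/2 < q" "q \<le> 1"
  shows "pstar_q k q \<le> majority_pstar m"
proof -
  have "1/2 \<in> fixpts 0 k - {0}"
    using F_eq_majority_prob[OF _ m(2), of 0 "1/2"] majority_prob_half[of m] m by (simp add: fixpts_def)
  then have "phi_minus 0 k \<le> q"
    using phi_minus_mem_fixpts(2)[OF m, of 0 "1/2"] majority_pstar_bounds[OF m(1)] q by simp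
  then show ?thesis
    using compact_GreatestI[OF compact_pstar_q_set[OF assms], of 0]
          pstar_eq_majority_pstar[OF m] majority_pstar_bounds[OF m(1)]
    unfolding pstar_q_def by auto
qed

section \<open>Contraction beyond \<open>mu\<close>\<close>

lemma F_le_1: "F p k x \<le> 1"
  by (simp add: F_def)

lemma F_iter_le_1: "q \<le> 1 \<Longrightarrow> (F p k ^^ t) q \<le> 1"
  by (cases t) (simp_all add: F_le_1)

locale noise_below_threshold =
  fixes m k :: nat and p :: real
  assumes m_ge_2: "m \<ge> 2" and k_eq: "k = 2*m-1"
    and p_bounds: "0 \<le> p" "p < majority_pstar m"
begin

lemma m_ge_1: "m \<ge> 1"
  using m_ge_2 by simp

lemma p_less_half: "p < 1/2"
  using p_bounds majority_pstar_bounds[OF m_ge_2] by simp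

lemma F_eq: "0 \<le> x \<Longrightarrow> x \<le> 1 \<Longrightarrow> F p k x = majority_prob m ((1-p) * x)"
  using F_eq_majority_prob[OF m_ge_1 k_eq, of p x] p_bounds p_less_half by simp

lemma F_mono:
  assumes "0 \<le> y" "y \<le> z" "z \<le> 1"
  shows "F p k y \<le> F p k z"
proof -
  have "(1-p) * z \<le> 1"
    using assms p_bounds p_less_half by (intro mult_le_one) auto
  then show ?thesis
    using majority_prob_mono[OF m_ge_1, of "(1-p) * y" "(1-p) * z"] assms p_less_half
    by (simp add: F_eq mult_left_mono)
qed

definition F_slope :: "real \<Rightarrow> real" where
  "F_slope x = (1-p) * majority_deriv m ((1-p) * x)"

lemma F_slope_nonneg: "0 \<le> x \<Longrightarrow> x \<le> 1 \<Longrightarrow> 0 \<le> F_slope x"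
  using p_bounds p_less_half m_ge_1 by (simp add: F_slope_def majority_deriv_nonneg mult_le_one)

lemma F_slope_unimodal:
  assumes "0 \<le> u" "u < v" "v < w" "w \<le> 1"
  shows "min (F_slope u) (F_slope w) < F_slope v"
proof -
  have "min (majority_deriv m ((1-p) * u)) (majority_deriv m ((1-p) * w)) < majority_deriv m ((1-p) * v)"
    using assms p_bounds p_less_half by (intro majority_deriv_unimodal[OF m_ge_2]) (auto intro: mult_le_one)
  then have "(1-p) * min (majority_deriv m ((1-p) * u)) (majority_deriv m ((1-p) * w))
      < (1-p) * majority_deriv m ((1-p) * v)"
    using p_less_half by (intro mult_strict_left_mono) auto
  then show ?thesis
    using p_less_half by (simp add: F_slope_def min_def split: if_splits)
qed

lemma F_mean_value:
  assumes "0 \<le> y" "y < z" "z \<le> 1"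
  obtains \<xi> where "y < \<xi>" "\<xi> < z" "F p k z - F p k y = (z - y) * F_slope \<xi>"
proof -
  have "(1-p) * y < (1-p) * z"
    using assms p_less_half by simp
  then obtain \<eta> where \<eta>: "(1-p) * y < \<eta>" "\<eta> < (1-p) * z"
    "majority_prob m ((1-p) * z) - majority_prob m ((1-p) * y) = ((1-p) * z - (1-p) * y) * majority_deriv m \<eta>"
    using majority_prob_mean_value[OF m_ge_1] by blast
  show ?thesis
  proof
    show "y < \<eta> / (1-p)" "\<eta> / (1-p) < z"
      using \<eta> p_less_half by (simp_all add: field_simps)
    have "(1-p) * (\<eta> / (1-p)) = \<eta>"
      using p_less_half by simp
    then show "F p k z - F p k y = (z - y) * F_slope (\<eta> / (1-p))"
      using \<eta>(3) assms by (simp add: F_eq F_slope_def algebra_simps)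
  qed
qed

lemma F_has_real_derivative:
  assumes "0 < x" "x < 1"
  shows "(F p k has_real_derivative F_slope x) (at x)"
proof -
  have "((\<lambda>x. majority_prob m ((1-p) * x)) has_real_derivative majority_deriv m ((1-p) * x) * (1-p)) (at x)"
    by (intro DERIV_chain2[OF majority_prob_has_real_derivative[OF m_ge_1]] DERIV_cmult_Id)
  then have "((\<lambda>x. majority_prob m ((1-p) * x)) has_real_derivative F_slope x) (at x)"
    by (simp add: F_slope_def mult.commute)
  then show ?thesis
    by (rule has_field_derivative_transform_within_open[where S = "{0<..<1}"])
       (use assms in \<open>auto simp: F_eq\<close>)
qed

lemma fixpts_nonzero:
  shows "1/2 \<le> phi_minus p k" "phi_minus p k < phi_plus p k"
    and "fixpts p k = {0, phi_minus p k, phi_plus p k}"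
proof -
  obtain x1 x2 where x: "1/2 \<le> x1" "x1 < x2" "fixpts p k = {0, x1, x2}"
    using fixpts_below_pstar[OF m_ge_2 k_eq p_bounds] .
  then have "fixpts p k - {0} = {x1, x2}"
    by auto
  then have "phi_minus p k = x1" "phi_plus p k = x2"
    using x by (auto simp: phi_minus_def phi_plus_def min_def max_def)
  with x show "1/2 \<le> phi_minus p k" "phi_minus p k < phi_plus p k"
    and "fixpts p k = {0, phi_minus p k, phi_plus p k}"
    by simp_all
qed

lemma fixpts_F: "F p k 0 = 0" "F p k (phi_minus p k) = phi_minus p k"
  "F p k (phi_plus p k) = phi_plus p k" "phi_plus p k \<le> 1"
proof -
  have "{0, phi_minus p k, phi_plus p k} \<subseteq> fixpts p k"
    by (subst fixpts_nonzero(3)) simp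
  then show "F p k 0 = 0" "F p k (phi_minus p k) = phi_minus p k"
    "F p k (phi_plus p k) = phi_plus p k" "phi_plus p k \<le> 1"
    by (simp_all add: fixpts_def)
qed

lemma F_slope_eq_1_points:
  obtains \<zeta> \<xi> where "0 < \<zeta>" "\<zeta> < phi_minus p k" "phi_minus p k < \<xi>" "\<xi> < phi_plus p k"
    "F_slope \<zeta> = 1" "F_slope \<xi> = 1"
proof -
  note x12 = fixpts_nonzero(1,2) and fp = fixpts_F
  obtain \<zeta> where "0 < \<zeta>" "\<zeta> < phi_minus p k" "F p k (phi_minus p k) - F p k 0 = (phi_minus p k - 0) * F_slope \<zeta>"
    using F_mean_value[of 0 "phi_minus p k"] x12 fp by auto
  moreover obtain \<xi> where "phi_minus p k < \<xi>" "\<xi> < phi_plus p k"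
    "F p k (phi_plus p k) - F p k (phi_minus p k) = (phi_plus p k - phi_minus p k) * F_slope \<xi>"
    using F_mean_value[of "phi_minus p k" "phi_plus p k"] x12 fp by auto
  ultimately show ?thesis
    using that x12 fp by simp
qed

text \<open>Since the slope is unimodal and also equals \<open>1\<close> below \<open>phi_minus p k\<close>, there is exactly one
  such point between the non-zero fixed points, and it lies beyond the mode.\<close>

lemma mu:
  shows "phi_minus p k < mu p k" "mu p k < phi_plus p k"
    and "1/2 < (1-p) * mu p k" "F_slope (mu p k) = 1"
proof -
  obtain \<zeta> \<xi> where \<zeta>: "0 < \<zeta>" "\<zeta> < phi_minus p k" "F_slope \<zeta> = 1"
    and \<xi>: "phi_minus p k < \<xi>" "\<xi> < phi_plus p k" "F_slope \<xi> = 1"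
    by (rule F_slope_eq_1_points)
  note x12 = fixpts_nonzero(1,2) and fp = fixpts_F
  have unique: "\<eta> = \<xi>" if "phi_minus p k < \<eta>" "\<eta> < phi_plus p k" "F_slope \<eta> = 1" for \<eta>
  proof (rule ccontr)
    assume "\<eta> \<noteq> \<xi>"
    then have "min (F_slope \<zeta>) (F_slope (max \<eta> \<xi>)) < F_slope (min \<eta> \<xi>)"
      using that \<xi> \<zeta> fp by (intro F_slope_unimodal) (auto simp: min_def max_def)
    then show False
      using that(3) \<xi>(3) \<zeta>(3) by (simp add: min_def max_def split: if_splits)
  qed
  have "mu p k = \<xi>"
    unfolding mu_def
  proof (rule the_equality)
    show "phi_minus p k < \<xi> \<and> \<xi> < phi_plus p k \<and> deriv (F p k) \<xi> = 1"
      using \<xi> x12 fp F_has_real_derivative[of \<xi>] by (auto intro!: DERIV_imp_deriv)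
  next
    fix \<eta> assume "phi_minus p k < \<eta> \<and> \<eta> < phi_plus p k \<and> deriv (F p k) \<eta> = 1"
    then show "\<eta> = \<xi>"
      using unique DERIV_imp_deriv[OF F_has_real_derivative[of \<eta>]] x12 fp by auto
  qed
  moreover have "1/2 < (1-p) * \<xi>"
  proof (rule ccontr)
    assume "\<not> 1/2 < (1-p) * \<xi>"
    then have "majority_deriv m ((1-p) * \<zeta>) < majority_deriv m ((1-p) * \<xi>)"
      using \<zeta> \<xi> x12 p_less_half by (intro majority_deriv_strict_mono[OF m_ge_2]) auto
    then have "F_slope \<zeta> < F_slope \<xi>"
      using p_less_half by (simp add: F_slope_def)
    then show False
      using \<zeta>(3) \<xi>(3) by simp
  qed
  ultimately show "phi_minus p k < mu p k" "mu p k < phi_plus p k"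
    and "1/2 < (1-p) * mu p k" "F_slope (mu p k) = 1"
    using \<xi> by simp_all
qed

lemma mu_pos: "0 < mu p k"
  using mu(1) fixpts_nonzero(1) by linarith

lemma F_slope_strict_antimono:
  assumes "mu p k \<le> x" "x < y" "y \<le> 1"
  shows "F_slope y < F_slope x"
proof -
  have "(1-p) * mu p k \<le> (1-p) * x" "(1-p) * x < (1-p) * y"
    using assms p_less_half by simp_all
  moreover have "(1-p) * y \<le> 1"
    using assms mu_pos p_bounds by (intro mult_le_one) auto
  ultimately have "(1-p) * x < (1-p) * y" "1/2 < (1-p) * x" "(1-p) * y \<le> 1"
    using mu(3) by linarith+
  then show ?thesis
    using majority_deriv_strict_antimono[OF m_ge_2, of "(1-p) * x" "(1-p) * y"] p_less_half
    by (simp add: F_slope_def)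
qed

lemma F_slope_less_1: "mu p k < x \<Longrightarrow> x \<le> 1 \<Longrightarrow> F_slope x < 1"
  using F_slope_strict_antimono[of "mu p k" x] mu(4) by simp

lemma F_lipschitz_above_mu:
  assumes "mu p k < L" "L \<le> 1"
  shows "(F_slope L)-lipschitz_on {L..1} (F p k)"
proof -
  have ordered: "dist (F p k y) (F p k z) \<le> F_slope L * dist y z"
    if yz: "L \<le> y" "y < z" "z \<le> 1" for y z
  proof -
    have "0 \<le> y"
      using yz assms mu_pos by linarith
    then obtain \<xi> where \<xi>: "y < \<xi>" "\<xi> < z" and mvt: "F p k z - F p k y = (z - y) * F_slope \<xi>"
      using F_mean_value yz by blast
    have "0 \<le> F_slope \<xi>" "F_slope \<xi> \<le> F_slope L"
      using F_slope_nonneg[of \<xi>] F_slope_strict_antimono[of L \<xi>] \<xi> yz assms \<open>0 \<le> y\<close> by auto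
    then have "0 \<le> F p k z - F p k y" "F p k z - F p k y \<le> (z - y) * F_slope L"
      using mvt yz by (simp_all add: mult_left_mono)
    then show ?thesis
      using yz by (simp add: dist_real_def mult.commute)
  qed
  show ?thesis
  proof (rule lipschitz_onI)
    fix y z assume "y \<in> {L..1}" "z \<in> {L..1}"
    then show "dist (F p k y) (F p k z) \<le> F_slope L * dist y z"
      using ordered[of y z] ordered[of z y] by (cases y z rule: linorder_cases) (auto simp: dist_commute)
  next
    show "0 \<le> F_slope L"
      using F_slope_nonneg assms mu_pos by simp
  qed
qed

lemma F_ge_self:
  assumes "mu p k < x" "x \<le> phi_plus p k"
  shows "x \<le> F p k x"
proof (cases "x = phi_plus p k")
  case False
  then have "0 \<le> x" "x < phi_plus p k"
    using assms mu_pos by auto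
  then obtain \<xi> where \<xi>: "x < \<xi>" "\<xi> < phi_plus p k"
    and mvt: "F p k (phi_plus p k) - F p k x = (phi_plus p k - x) * F_slope \<xi>"
    using F_mean_value fixpts_F(4) by blast
  have "(phi_plus p k - x) * F_slope \<xi> < (phi_plus p k - x) * 1"
    using F_slope_less_1[of \<xi>] \<xi> assms fixpts_F(4) by (intro mult_strict_left_mono) auto
  then show ?thesis
    using mvt fixpts_F(3) by simp
qed (use fixpts_F(3) in simp)

lemma F_iter_ge:
  assumes "mu p k < L" "L \<le> phi_plus p k" "L \<le> q" "q \<le> 1"
  shows "L \<le> (F p k ^^ t) q"
proof (induction t)
  case (Suc t)
  have "L \<le> F p k L"
    using F_ge_self assms by simp
  also have "\<dots> \<le> F p k ((F p k ^^ t) q)"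
    using Suc F_iter_le_1[OF assms(4)] assms mu_pos by (intro F_mono) auto
  finally show ?case
    by simp
qed (use assms in simp)

lemma orbit_in_contraction_region:
  assumes "mu p k < q" "q \<le> 1"
  obtains c L \<epsilon> where "c < 1" "c-lipschitz_on {L..1} (F p k)" "0 < \<epsilon>" "\<And>t. L + \<epsilon> \<le> (F p k ^^ t) q"
proof -
  define L0 where "L0 = min q (phi_plus p k)"
  define L where "L = (mu p k + L0) / 2"
  have L0: "mu p k < L0" "L0 \<le> 1"
    using assms mu(2) by (auto simp: L0_def)
  then have "L0 \<le> (F p k ^^ t) q" for t
    using F_iter_ge[of L0 q t] assms by (simp add: L0_def)
  then have "L + (L0 - mu p k) / 2 \<le> (F p k ^^ t) q" for t
    by (simp add: L_def field_simps)
  moreover have "mu p k < L" "L \<le> 1"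
    using L0 by (simp_all add: L_def)
  ultimately show ?thesis
    using L0 F_lipschitz_above_mu F_slope_less_1
    by (intro that[where c = "F_slope L" and L = L and \<epsilon> = "(L0 - mu p k) / 2"]) simp_all
qed

end

section \<open>Concentration in one round\<close>

lemma bool_pmf_eq_bernoulli: "N = bernoulli_pmf (pmf N True)"
proof (rule pmf_eqI)
  fix b :: bool
  show "pmf N b = pmf (bernoulli_pmf (pmf N True)) b"
    by (cases b) (simp_all add: pmf_False_conv_True pmf_le_1)
qed

lemma finite_nbhd: "finite (nbhd E n v)"
  by (simp add: nbhd_def)

lemma nbhd_subset: "nbhd E n v \<subseteq> {1..n}"
  by (auto simp: nbhd_def)

lemma card_nbhd_ge_min_degree: "v \<in> {1..n} \<Longrightarrow> min_degree E n \<le> card (nbhd E n v)"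
  unfolding min_degree_def by (intro Min_le) auto

lemma phi_nonneg: "0 \<le> phi E n x u"
  by (simp add: phi_def)

lemma phi_le_1: "phi E n x u \<le> 1"
proof -
  have "card {v \<in> nbhd E n u. x v} \<le> card (nbhd E n u)"
    by (intro card_mono finite_nbhd) auto
  then show ?thesis
    by (cases "card (nbhd E n u) = 0") (auto simp: phi_def divide_le_eq_1)
qed

lemma seen_eq_bernoulli:
  assumes "nbhd E n u \<noteq> {}" "0 \<le> p" "p \<le> 1"
  shows "seen E n p x u = bernoulli_pmf ((1-p) * phi E n x u)"
proof -
  define N where "N = nbhd E n u"
  have "pmf (bind_pmf (bernoulli_pmf p) (\<lambda>b. return_pmf (\<not> b \<and> x v))) True = (if x v then 1 - p else 0)" for v
    using assms(2,3) by (simp add: pmf_bind)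
  then have "pmf (seen E n p x u) True = (\<Sum>v\<in>N. if x v then 1 - p else 0) / real (card N)"
    using assms(1) finite_nbhd[of E n u]
    by (simp add: seen_def pmf_bind integral_pmf_of_set N_def)
  also have "\<dots> = (1-p) * phi E n x u"
    using finite_nbhd[of E n u] by (simp add: sum.If_cases Int_def phi_def N_def)
  finally show ?thesis
    by (subst bool_pmf_eq_bernoulli) simp
qed

lemma node_update_eq_bernoulli:
  assumes "nbhd E n u \<noteq> {}" "0 \<le> p" "p \<le> 1"
  shows "node_update E n k p x u = bernoulli_pmf (F p k (phi E n x u))"
proof -
  define r where "r = (1-p) * phi E n x u"
  have r: "r \<in> {0..1}"
    using assms(2,3) phi_nonneg[of E n x u] phi_le_1[of E n x u] by (auto simp: r_def intro: mult_le_one)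
  have "card {i \<in> {..<k}. \<not> s i} = k - card {i \<in> {..<k}. s i}" for s :: "nat \<Rightarrow> bool"
  proof -
    have "{i \<in> {..<k}. \<not> s i} = {..<k} - {i \<in> {..<k}. s i}"
      by auto
    moreover have "card ({..<k} - {i \<in> {..<k}. s i}) = k - card {i \<in> {..<k}. s i}"
      by (subst card_Diff_subset) auto
    ultimately show ?thesis
      by simp
  qed
  moreover have "card {i \<in> {..<k}. s i} \<le> k" for s :: "nat \<Rightarrow> bool"
    using card_mono[of "{..<k}" "{i \<in> {..<k}. s i}"] by auto
  ultimately have "node_update E n k p x u =
      map_pmf (\<lambda>j. k < 2 * j) (map_pmf (\<lambda>s. card {i \<in> {..<k}. s i}) (Pi_pmf {..<k} False (\<lambda>_. bernoulli_pmf r)))"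
    unfolding node_update_def seen_eq_bernoulli[OF assms] r_def[symmetric] map_pmf_comp
    by (intro map_pmf_cong) (auto simp: less_diff_conv2)
  also have "map_pmf (\<lambda>s. card {i \<in> {..<k}. s i}) (Pi_pmf {..<k} False (\<lambda>_. bernoulli_pmf r)) = binomial_pmf k r"
    using binomial_pmf_altdef'[of "{..<k}" k r] r by simp
  finally have "pmf (node_update E n k p x u) True = measure_pmf.prob (binomial_pmf k r) {j. k < 2 * j}"
    by (simp add: pmf_map vimage_def)
  also have "{j. k < 2 * j} = {i. 2 * i \<ge> k + 1}"
    by auto
  finally show ?thesis
    by (subst bool_pmf_eq_bernoulli) (simp add: F_def r_def)
qed

lemma prob_Pi_pmf_count_deviation:
  fixes P :: "'a \<Rightarrow> bool pmf"
  assumes A: "finite A" and S: "S \<subseteq> A" "S \<noteq> {}" and e: "e \<ge> 0"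
  shows "measure_pmf.prob (Pi_pmf A False P)
     {y. \<bar>real (card {w\<in>S. y w}) - (\<Sum>w\<in>S. pmf (P w) True)\<bar> \<ge> e} \<le> 2 * exp (-2 * e^2 / real (card S))"
proof -
  define M where "M = measure_pmf (Pi_pmf A False P)"
  define X where "X = (\<lambda>w (y :: 'a \<Rightarrow> bool). of_bool (y w) :: real)"
  have finS: "finite S"
    using A S finite_subset by blast
  interpret M: prob_space M
    unfolding M_def by (rule measure_pmf.prob_space_axioms)
  have "M.indep_vars (\<lambda>_. count_space UNIV) (\<lambda>x f. f x) A"
    unfolding M_def by (rule indep_vars_Pi_pmf[OF A])
  then have "M.indep_vars (\<lambda>_. borel) (\<lambda>w y. of_bool (y w) :: real) A"
    by (rule M.indep_vars_compose2) auto
  then have indep: "M.indep_vars (\<lambda>_. borel) X S"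
    unfolding X_def by (rule M.indep_vars_subset[OF _ S(1)])
  have "M.expectation (X w) = pmf (P w) True" if "w \<in> S" for w
  proof -
    have "M.expectation (X w) = measure_pmf.expectation (map_pmf (\<lambda>f. f w) (Pi_pmf A False P)) of_bool"
      by (simp add: M_def X_def)
    also have "map_pmf (\<lambda>f. f w) (Pi_pmf A False P) = P w"
      using Pi_pmf_component[OF A, of w False P] that S by auto
    also have "measure_pmf.expectation (P w) of_bool = pmf (P w) True"
      by (simp add: integral_measure_pmf[of "{True, False}"] pmf_False_conv_True)
    finally show ?thesis .
  qed
  then have mean: "(\<Sum>w\<in>S. pmf (P w) True) = (\<Sum>w\<in>S. M.expectation (X w))"
    by simp
  interpret H: Hoeffding_ineq M S X "\<lambda>_. 0" "\<lambda>_. 1" "\<Sum>w\<in>S. pmf (P w) True"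
    by unfold_locales (use finS indep mean in \<open>auto simp: X_def\<close>)
  have "M.prob {y\<in>space M. \<bar>(\<Sum>w\<in>S. X w y) - (\<Sum>w\<in>S. pmf (P w) True)\<bar> \<ge> e}
        \<le> 2 * exp (-2 * e^2 / (\<Sum>w\<in>S. (1 - 0)^2))"
    by (rule H.Hoeffding_ineq_abs_ge[OF e]) (use finS S in auto)
  then show ?thesis
    using finS by (simp add: M_def X_def of_bool_def sum.If_cases Int_def)
qed

definition expected_phi :: "(nat \<Rightarrow> nat \<Rightarrow> nat \<Rightarrow> bool) \<Rightarrow> nat \<Rightarrow> (nat \<Rightarrow> bool pmf) \<Rightarrow> nat \<Rightarrow> real" where
  "expected_phi E n P v = (\<Sum>w\<in>nbhd E n v. pmf (P w) True) / real (card (nbhd E n v))"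

lemma prob_phi_deviation:
  assumes "nbhd E n v \<noteq> {}" "0 \<le> s"
  shows "measure_pmf.prob (Pi_pmf {1..n} False P) {y. s \<le> \<bar>phi E n y v - expected_phi E n P v\<bar>}
     \<le> 2 * exp (-2 * s^2 * real (card (nbhd E n v)))"
proof -
  define N where "N = nbhd E n v"
  define d where "d = real (card N)"
  have d: "d > 0"
    using assms(1) finite_nbhd[of E n v] by (simp add: d_def N_def card_gt_0_iff)
  have "\<bar>phi E n y v - expected_phi E n P v\<bar> = \<bar>real (card {w\<in>N. y w}) - (\<Sum>w\<in>N. pmf (P w) True)\<bar> / d" for y
    using d by (simp add: phi_def expected_phi_def N_def[symmetric] d_def[symmetric] flip: diff_divide_distrib)
  then have "{y. s \<le> \<bar>phi E n y v - expected_phi E n P v\<bar>} =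
      {y. s * d \<le> \<bar>real (card {w\<in>N. y w}) - (\<Sum>w\<in>N. pmf (P w) True)\<bar>}"
    using d by (simp add: le_divide_eq)
  also have "measure_pmf.prob (Pi_pmf {1..n} False P) \<dots> \<le> 2 * exp (-2 * (s * d)^2 / d)"
    using prob_Pi_pmf_count_deviation[of "{1..n}" N "s * d" P] nbhd_subset assms d
    by (simp add: N_def d_def)
  also have "-2 * (s * d)^2 / d = -2 * s^2 * d"
    using d by (simp add: power2_eq_square)
  finally show ?thesis
    by (simp add: d_def N_def)
qed

lemma prob_some_phi_deviation:
  assumes deg: "0 < min_degree E n" and s: "0 \<le> s"
  shows "measure_pmf.prob (Pi_pmf {1..n} False P) {y. \<exists>v\<in>{1..n}. s \<le> \<bar>phi E n y v - expected_phi E n P v\<bar>}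
     \<le> real n * (2 * exp (-2 * s^2 * real (min_degree E n)))"
proof -
  let ?M = "measure_pmf (Pi_pmf {1..n} False P)"
  let ?A = "\<lambda>v. {y. s \<le> \<bar>phi E n y v - expected_phi E n P v\<bar>}"
  have "{y. \<exists>v\<in>{1..n}. s \<le> \<bar>phi E n y v - expected_phi E n P v\<bar>} = (\<Union>v\<in>{1..n}. ?A v)"
    by blast
  then have "measure ?M {y. \<exists>v\<in>{1..n}. s \<le> \<bar>phi E n y v - expected_phi E n P v\<bar>}
      \<le> (\<Sum>v\<in>{1..n}. measure ?M (?A v))"
    by (simp only:) (rule measure_UNION_le, auto)
  also have "\<dots> \<le> (\<Sum>v\<in>{1..n}. 2 * exp (-2 * s^2 * real (min_degree E n)))"
  proof (rule sum_mono)
    fix v assume v: "v \<in> {1..n}"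
    then have "nbhd E n v \<noteq> {}"
      using card_nbhd_ge_min_degree[OF v, of E] deg by auto
    then have "measure ?M (?A v) \<le> 2 * exp (-2 * s^2 * real (card (nbhd E n v)))"
      using prob_phi_deviation s by blast
    also have "\<dots> \<le> 2 * exp (-2 * s^2 * real (min_degree E n))"
      using card_nbhd_ge_min_degree[OF v, of E] by (simp add: mult_left_mono)
    finally show "measure ?M (?A v) \<le> 2 * exp (-2 * s^2 * real (min_degree E n))" .
  qed
  finally show ?thesis
    by simp
qed

lemma nbhd_nonempty: "0 < min_degree E n \<Longrightarrow> v \<in> {1..n} \<Longrightarrow> nbhd E n v \<noteq> {}"
  using card_nbhd_ge_min_degree[of v n E] by auto

lemma expected_phi_node_update:
  assumes deg: "0 < min_degree E n" and p: "0 \<le> p" "p \<le> 1"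
    and lip: "c-lipschitz_on {L..1} (F p k)"
    and Q: "L + \<epsilon> \<le> Q" "Q \<le> 1"
    and close: "\<And>w. w \<in> {1..n} \<Longrightarrow> \<bar>phi E n x w - Q\<bar> \<le> \<epsilon>"
    and v: "v \<in> {1..n}"
  shows "\<bar>expected_phi E n (node_update E n k p x) v - F p k Q\<bar> \<le> c * \<epsilon>"
proof -
  define N where "N = nbhd E n v"
  have N: "N \<noteq> {}" "finite N" "N \<subseteq> {1..n}"
    using nbhd_nonempty[OF deg v] finite_nbhd nbhd_subset by (auto simp: N_def)
  have each: "\<bar>F p k (phi E n x w) - F p k Q\<bar> \<le> c * \<epsilon>" if "w \<in> N" for w
  proof -
    have w: "\<bar>phi E n x w - Q\<bar> \<le> \<epsilon>"
      using close that N by auto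
    then have "\<bar>F p k (phi E n x w) - F p k Q\<bar> \<le> c * \<bar>phi E n x w - Q\<bar>"
      using lipschitz_onD[OF lip, of "phi E n x w" Q] Q phi_le_1[of E n x w]
      by (force simp: dist_real_def)
    also have "\<dots> \<le> c * \<epsilon>"
      using w lipschitz_on_nonneg[OF lip] by (rule mult_left_mono)
    finally show ?thesis .
  qed
  have "\<bar>\<Sum>w\<in>N. F p k (phi E n x w) - F p k Q\<bar> \<le> (\<Sum>w\<in>N. \<bar>F p k (phi E n x w) - F p k Q\<bar>)"
    by (rule sum_abs)
  also have "\<dots> \<le> (\<Sum>w\<in>N. c * \<epsilon>)"
    using each by (rule sum_mono)
  finally have sum_le: "\<bar>\<Sum>w\<in>N. F p k (phi E n x w) - F p k Q\<bar> \<le> real (card N) * (c * \<epsilon>)"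
    by simp
  moreover have "pmf (node_update E n k p x w) True = F p k (phi E n x w)" if "w \<in> N" for w
  proof -
    have "node_update E n k p x w = bernoulli_pmf (F p k (phi E n x w))"
      using node_update_eq_bernoulli[OF nbhd_nonempty[OF deg] p] that N by blast
    then show ?thesis
      by (simp add: F_def)
  qed
  then have "expected_phi E n (node_update E n k p x) v - F p k Q
      = (\<Sum>w\<in>N. F p k (phi E n x w) - F p k Q) / real (card N)"
    using N by (simp add: expected_phi_def N_def[symmetric] sum_subtractf field_simps)
  then show ?thesis
    using sum_le N by (simp add: pos_divide_le_eq card_gt_0_iff mult.commute)
qed

lemma prob_em_step_deviation:
  assumes deg: "0 < min_degree E n" and p: "0 \<le> p" "p \<le> 1"
    and lip: "c-lipschitz_on {L..1} (F p k)" "c < 1"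
    and Q: "L + \<epsilon> \<le> Q" "Q \<le> 1" and \<epsilon>: "0 < \<epsilon>"
    and close: "\<And>w. w \<in> {1..n} \<Longrightarrow> \<bar>phi E n x w - Q\<bar> \<le> \<epsilon>"
  shows "measure_pmf.prob (em_step E n k p x) {y. \<exists>v\<in>{1..n}. \<epsilon> < \<bar>phi E n y v - F p k Q\<bar>}
     \<le> real n * (2 * exp (-2 * ((1-c) * \<epsilon>)^2 * real (min_degree E n)))"
proof -
  let ?P = "node_update E n k p x"
  have "{y. \<exists>v\<in>{1..n}. \<epsilon> < \<bar>phi E n y v - F p k Q\<bar>}
      \<subseteq> {y. \<exists>v\<in>{1..n}. (1-c) * \<epsilon> \<le> \<bar>phi E n y v - expected_phi E n ?P v\<bar>}"
    using expected_phi_node_update[OF deg p lip(1) Q close] by (force simp: algebra_simps)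
  then have "measure_pmf.prob (em_step E n k p x) {y. \<exists>v\<in>{1..n}. \<epsilon> < \<bar>phi E n y v - F p k Q\<bar>}
      \<le> measure_pmf.prob (Pi_pmf {1..n} False ?P)
           {y. \<exists>v\<in>{1..n}. (1-c) * \<epsilon> \<le> \<bar>phi E n y v - expected_phi E n ?P v\<bar>}"
    unfolding em_step_def by (rule measure_pmf.finite_measure_mono) simp
  also have "\<dots> \<le> real n * (2 * exp (-2 * ((1-c) * \<epsilon>)^2 * real (min_degree E n)))"
    using lip(2) \<epsilon> by (intro prob_some_phi_deviation deg) simp
  finally show ?thesis .
qed

lemma prob_init_config_deviation:
  assumes deg: "0 < min_degree E n" and q: "0 \<le> q" "q \<le> 1" and s: "0 \<le> s" "s \<le> \<epsilon>"
  shows "measure_pmf.prob (init_config n q) {x. \<exists>v\<in>{1..n}. \<epsilon> < \<bar>phi E n x v - q\<bar>}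
     \<le> real n * (2 * exp (-2 * s^2 * real (min_degree E n)))"
proof -
  let ?P = "\<lambda>_. bernoulli_pmf q"
  have "expected_phi E n ?P v = q" if "v \<in> {1..n}" for v
    using nbhd_nonempty[OF deg that] finite_nbhd[of E n v] q by (simp add: expected_phi_def)
  then have "{x. \<exists>v\<in>{1..n}. \<epsilon> < \<bar>phi E n x v - q\<bar>}
      \<subseteq> {x. \<exists>v\<in>{1..n}. s \<le> \<bar>phi E n x v - expected_phi E n ?P v\<bar>}"
    using s by force
  then have "measure_pmf.prob (init_config n q) {x. \<exists>v\<in>{1..n}. \<epsilon> < \<bar>phi E n x v - q\<bar>}
      \<le> measure_pmf.prob (Pi_pmf {1..n} False ?P) {x. \<exists>v\<in>{1..n}. s \<le> \<bar>phi E n x v - expected_phi E n ?P v\<bar>}"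
    unfolding init_config_def by (rule measure_pmf.finite_measure_mono) simp
  also have "\<dots> \<le> real n * (2 * exp (-2 * s^2 * real (min_degree E n)))"
    by (rule prob_some_phi_deviation[OF deg s(1)])
  finally show ?thesis .
qed

section \<open>The whole trajectory\<close>

lemma prob_bind_pmf_le:
  assumes "\<And>x. x \<in> set_pmf M \<Longrightarrow> measure_pmf.prob (f x) B \<le> indicator A x + \<beta>" and "0 \<le> \<beta>"
  shows "measure_pmf.prob (bind_pmf M f) B \<le> measure_pmf.prob M A + \<beta>"
proof -
  have "emeasure (bind_pmf M f) B = (\<integral>\<^sup>+x. emeasure (f x) B \<partial>M)"
    by simp
  also have "\<dots> \<le> (\<integral>\<^sup>+x. indicator A x + ennreal \<beta> \<partial>M)"
  proof (rule nn_integral_mono_AE, rule AE_pmfI)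
    fix x assume "x \<in> set_pmf M"
    then have "emeasure (f x) B \<le> ennreal (indicator A x + \<beta>)"
      by (simp add: measure_pmf.emeasure_eq_measure ennreal_leI assms(1))
    also have "\<dots> = indicator A x + ennreal \<beta>"
      using assms(2) by (simp add: indicator_def)
    finally show "emeasure (f x) B \<le> indicator A x + ennreal \<beta>" .
  qed
  also have "\<dots> = emeasure M A + ennreal \<beta>"
    by (subst nn_integral_add) (auto simp: measure_pmf.emeasure_space_1)
  also have "\<dots> = ennreal (measure_pmf.prob M A + \<beta>)"
    using assms(2) by (simp add: measure_pmf.emeasure_eq_measure)
  finally have "ennreal (measure_pmf.prob (bind_pmf M f) B) \<le> ennreal (measure_pmf.prob M A + \<beta>)"
    by (simp only: measure_pmf.emeasure_eq_measure)
  moreover have "0 \<le> measure_pmf.prob M A + \<beta>"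
    using assms(2) by simp
  ultimately show ?thesis
    using ennreal_le_iff by blast
qed

lemma length_em_traj: "xs \<in> set_pmf (em_traj E n k p q T) \<Longrightarrow> length xs = Suc T"
  by (induction T arbitrary: xs) auto

definition trajectory_close ::
    "(nat \<Rightarrow> nat \<Rightarrow> nat \<Rightarrow> bool) \<Rightarrow> nat \<Rightarrow> nat \<Rightarrow> real \<Rightarrow> real \<Rightarrow> real \<Rightarrow> nat \<Rightarrow> (nat \<Rightarrow> bool) list \<Rightarrow> bool" where
  "trajectory_close E n k p q \<epsilon> T xs \<longleftrightarrow> (\<forall>t \<le> T. \<forall>v\<in>{1..n}. \<bar>phi E n (xs ! t) v - (F p k ^^ t) q\<bar> \<le> \<epsilon>)"

lemma trajectory_close_snoc:
  assumes "length xs = Suc T" "trajectory_close E n k p q \<epsilon> T xs"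
    and "\<forall>v\<in>{1..n}. \<bar>phi E n y v - F p k ((F p k ^^ T) q)\<bar> \<le> \<epsilon>"
  shows "trajectory_close E n k p q \<epsilon> (Suc T) (xs @ [y])"
  using assms by (auto simp: trajectory_close_def nth_append le_Suc_eq)

lemma trajectory_close_last:
  "length xs = Suc T \<Longrightarrow> trajectory_close E n k p q \<epsilon> T xs \<Longrightarrow> v \<in> {1..n} \<Longrightarrow>
    \<bar>phi E n (last xs) v - (F p k ^^ T) q\<bar> \<le> \<epsilon>"
  using last_conv_nth[of xs] by (cases xs) (auto simp: trajectory_close_def)

text \<open>One round leaves the \<open>\<epsilon>\<close>-tube around the orbit with small probability: the contraction shrinks
  the deviation inherited from the previous round to \<open>c \<epsilon>\<close>, leaving room \<open>(1 - c) \<epsilon>\<close> for the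
  sampling error.\<close>

lemma prob_trajectory_close_step:
  assumes deg: "0 < min_degree E n" and p: "0 \<le> p" "p \<le> 1" and q: "q \<le> 1"
    and lip: "c-lipschitz_on {L..1} (F p k)" "c < 1" and \<epsilon>: "0 < \<epsilon>"
    and orbit: "\<And>t. L + \<epsilon> \<le> (F p k ^^ t) q"
    and xs: "length xs = Suc T" "trajectory_close E n k p q \<epsilon> T xs"
  shows "measure_pmf.prob (map_pmf (\<lambda>y. xs @ [y]) (em_step E n k p (last xs)))
      {ys. \<not> trajectory_close E n k p q \<epsilon> (Suc T) ys}
    \<le> real n * (2 * exp (-2 * ((1-c) * \<epsilon>)^2 * real (min_degree E n)))"
proof -
  let ?Q = "(F p k ^^ T) q"
  have "(\<lambda>y. xs @ [y]) -` {ys. \<not> trajectory_close E n k p q \<epsilon> (Suc T) ys}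
      \<subseteq> {y. \<exists>v\<in>{1..n}. \<epsilon> < \<bar>phi E n y v - F p k ?Q\<bar>}"
    using trajectory_close_snoc[OF xs] by force
  then have "measure_pmf.prob (map_pmf (\<lambda>y. xs @ [y]) (em_step E n k p (last xs)))
      {ys. \<not> trajectory_close E n k p q \<epsilon> (Suc T) ys}
    \<le> measure_pmf.prob (em_step E n k p (last xs)) {y. \<exists>v\<in>{1..n}. \<epsilon> < \<bar>phi E n y v - F p k ?Q\<bar>}"
    by (simp add: measure_pmf.finite_measure_mono)
  also have "\<dots> \<le> real n * (2 * exp (-2 * ((1-c) * \<epsilon>)^2 * real (min_degree E n)))"
    using trajectory_close_last[OF xs]
    by (intro prob_em_step_deviation[OF deg p lip orbit F_iter_le_1[OF q] \<epsilon>])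
  finally show ?thesis .
qed

lemma prob_not_trajectory_close:
  assumes deg: "0 < min_degree E n" and p: "0 \<le> p" "p \<le> 1" and q: "0 \<le> q" "q \<le> 1"
    and lip: "c-lipschitz_on {L..1} (F p k)" "c < 1" and \<epsilon>: "0 < \<epsilon>"
    and orbit: "\<And>t. L + \<epsilon> \<le> (F p k ^^ t) q"
  shows "measure_pmf.prob (em_traj E n k p q T) {xs. \<not> trajectory_close E n k p q \<epsilon> T xs}
     \<le> real (Suc T) * (real n * (2 * exp (-2 * ((1-c) * \<epsilon>)^2 * real (min_degree E n))))"
proof (induction T)
  case 0
  have "(1-c) * \<epsilon> \<le> \<epsilon>"
    using lipschitz_on_nonneg[OF lip(1)] \<epsilon> by (simp add: algebra_simps)
  moreover have "(\<lambda>x. [x]) -` {xs. \<not> trajectory_close E n k p q \<epsilon> 0 xs} = {x. \<exists>v\<in>{1..n}. \<epsilon> < \<bar>phi E n x v - q\<bar>}"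
    by (force simp: trajectory_close_def not_le)
  ultimately show ?case
    using prob_init_config_deviation[OF deg q, of "(1-c) * \<epsilon>" \<epsilon>] lip(2) \<epsilon> by simp
next
  case (Suc T)
  define \<beta> where "\<beta> = real n * (2 * exp (-2 * ((1-c) * \<epsilon>)^2 * real (min_degree E n)))"
  let ?bad = "\<lambda>T. {xs. \<not> trajectory_close E n k p q \<epsilon> T xs}"
  have "measure_pmf.prob (em_traj E n k p q (Suc T)) (?bad (Suc T)) \<le> measure_pmf.prob (em_traj E n k p q T) (?bad T) + \<beta>"
    unfolding em_traj.simps(2)
  proof (rule prob_bind_pmf_le)
    fix xs assume xs: "xs \<in> set_pmf (em_traj E n k p q T)"
    show "measure_pmf.prob (map_pmf (\<lambda>y. xs @ [y]) (em_step E n k p (last xs))) (?bad (Suc T))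
        \<le> indicator (?bad T) xs + \<beta>"
    proof (cases "trajectory_close E n k p q \<epsilon> T xs")
      case True
      then show ?thesis
        using prob_trajectory_close_step[OF deg p q(2) lip \<epsilon> orbit length_em_traj[OF xs]] by (simp add: \<beta>_def)
    next
      case False
      have "0 \<le> \<beta>"
        by (simp add: \<beta>_def)
      with False show ?thesis
        using measure_pmf.prob_le_1[of "map_pmf (\<lambda>y. xs @ [y]) (em_step E n k p (last xs))" "?bad (Suc T)"]
        by (simp del: measure_pmf.prob_le_1)
    qed
  qed (simp add: \<beta>_def)
  also have "\<dots> \<le> real (Suc (Suc T)) * \<beta>"
    using Suc.IH by (simp add: \<beta>_def algebra_simps)
  finally show ?case
    unfolding \<beta>_def .
qed

lemma eventually_min_degree_pos:
  assumes "(\<lambda>n. ln (real n)) \<in> o(\<lambda>n. real (min_degree E n))"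
  shows "eventually (\<lambda>n. 0 < min_degree E n) sequentially"
  using landau_o.smallD[OF assms zero_less_one] eventually_gt_at_top[of 1]
proof eventually_elim
  case (elim n)
  then have "0 < ln (real n)"
    by simp
  with elim(1) show ?case
    by simp
qed

text \<open>Since \<open>ln n = o(\<delta>\<^sub>n)\<close>, eventually \<open>exp (-2 s\<^sup>2 \<delta>\<^sub>n) \<le> n powr -(K + 2)\<close>, which beats the
  \<open>n powr K\<close> rounds and \<open>n\<close> nodes of the union bound.\<close>

lemma union_bound_tendsto_0:
  fixes \<delta> :: "nat \<Rightarrow> real"
  assumes K: "0 < K" and s: "0 < s" and \<delta>: "(\<lambda>n. ln (real n)) \<in> o(\<delta>)" "\<And>n. 0 \<le> \<delta> n"
  shows "(\<lambda>n. real (Suc (nat \<lfloor>real n powr K\<rfloor>)) * (real n * (2 * exp (-2 * s^2 * \<delta> n)))) \<longlonglongrightarrow> 0"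
proof -
  define C where "C = (K + 2) / (2 * s^2)"
  have C: "0 < C" "2 * s^2 * C = K + 2"
    using K s by (simp_all add: C_def)
  have "eventually (\<lambda>n. norm (ln (real n)) \<le> 1 / C * norm (\<delta> n)) sequentially"
    using landau_o.smallD[OF \<delta>(1), of "1 / C"] C(1) by simp
  then have upper: "eventually (\<lambda>n. real (Suc (nat \<lfloor>real n powr K\<rfloor>)) * (real n * (2 * exp (-2 * s^2 * \<delta> n)))
      \<le> (real n powr K + 1) * real n * 2 * real n powr (-(K+2))) sequentially"
    using eventually_ge_at_top[of 1]
  proof eventually_elim
    case (elim n)
    have "C * ln (real n) \<le> \<delta> n"
      using elim C(1) \<delta>(2)[of n] by (simp add: field_simps)
    then have "-2 * s^2 * \<delta> n \<le> -2 * s^2 * (C * ln (real n))"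
      by (intro mult_left_mono_neg) simp_all
    also have "\<dots> = -(K+2) * ln (real n)"
      using C(2) by (simp flip: mult.assoc)
    finally have "-2 * s^2 * \<delta> n \<le> -(K+2) * ln (real n)" .
    then have "exp (-2 * s^2 * \<delta> n) \<le> real n powr (-(K+2))"
      using elim(2) by (simp add: powr_def)
    then have nodes: "real n * (2 * exp (-2 * s^2 * \<delta> n)) \<le> real n * (2 * real n powr (-(K+2)))"
      by (intro mult_left_mono) simp_all
    have rounds: "real (Suc (nat \<lfloor>real n powr K\<rfloor>)) \<le> real n powr K + 1"
      by simp
    have "real (Suc (nat \<lfloor>real n powr K\<rfloor>)) * (real n * (2 * exp (-2 * s^2 * \<delta> n)))
      \<le> (real n powr K + 1) * (real n * (2 * real n powr (-(K+2))))"
      by (rule mult_mono[OF rounds nodes]) simp_all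
    then show ?case
      by (simp only: mult.assoc)
  qed
  have lim: "(\<lambda>n::nat. (real n powr K + 1) * real n * 2 * real n powr (-(K+2))) \<longlonglongrightarrow> 0"
    using K by real_asymp
  show ?thesis
    by (rule tendsto_sandwich[OF _ upper tendsto_const lim]) (auto intro!: always_eventually)
qed

lemma tendsto_prob_trajectory_close:
  assumes deg: "(\<lambda>n. ln (real n)) \<in> o(\<lambda>n. real (min_degree E n))" and K: "0 < K"
    and p: "0 \<le> p" "p \<le> 1" and q: "0 \<le> q" "q \<le> 1"
    and lip: "c-lipschitz_on {L..1} (F p k)" "c < 1" and \<epsilon>: "0 < \<epsilon>"
    and orbit: "\<And>t. L + \<epsilon> \<le> (F p k ^^ t) q"
  shows "(\<lambda>n. measure_pmf.prob (em_traj E n k p q (nat \<lfloor>real n powr K\<rfloor>))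
            {xs. trajectory_close E n k p q \<epsilon> (nat \<lfloor>real n powr K\<rfloor>) xs}) \<longlonglongrightarrow> 1"
proof -
  define T where "T n = nat \<lfloor>real n powr K\<rfloor>" for n :: nat
  define \<beta> where "\<beta> n = real (Suc (T n)) * (real n * (2 * exp (-2 * ((1-c) * \<epsilon>)^2 * real (min_degree E n))))"
    for n :: nat
  have "\<beta> \<longlonglongrightarrow> 0"
    unfolding \<beta>_def T_def using lip(2) \<epsilon> by (intro union_bound_tendsto_0[OF K _ deg]) simp_all
  then have lower: "(\<lambda>n. 1 - \<beta> n) \<longlonglongrightarrow> 1"
    by (auto intro: tendsto_eq_intros)
  have above_lower: "eventually (\<lambda>n. 1 - \<beta> n \<le> measure_pmf.prob (em_traj E n k p q (T n))
      {xs. trajectory_close E n k p q \<epsilon> (T n) xs}) sequentially"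
    using eventually_min_degree_pos[OF deg]
  proof eventually_elim
    case (elim n)
    have "measure_pmf.prob (em_traj E n k p q (T n)) {xs. \<not> trajectory_close E n k p q \<epsilon> (T n) xs} \<le> \<beta> n"
      unfolding \<beta>_def by (rule prob_not_trajectory_close[OF elim p q lip \<epsilon> orbit])
    then show ?case
      using measure_pmf.prob_compl[of "{xs. \<not> trajectory_close E n k p q \<epsilon> (T n) xs}" "em_traj E n k p q (T n)"]
      by (simp add: Compl_eq_Diff_UNIV[symmetric] Collect_neg_eq[symmetric])
  qed
  show ?thesis
    unfolding T_def[symmetric]
    by (rule tendsto_sandwich[OF above_lower _ lower tendsto_const]) (auto intro!: always_eventually)
qed

lemma prob_tendsto_1_mono:
  assumes "(\<lambda>n. measure_pmf.prob (M n) (A n)) \<longlonglongrightarrow> 1" "\<And>n. A n \<subseteq> B n"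
  shows "(\<lambda>n. measure_pmf.prob (M n) (B n)) \<longlonglongrightarrow> 1"
proof (rule tendsto_sandwich[OF _ _ assms(1) tendsto_const])
  show "eventually (\<lambda>n. measure_pmf.prob (M n) (A n) \<le> measure_pmf.prob (M n) (B n)) sequentially"
    using assms(2) by (intro always_eventually allI measure_pmf.finite_measure_mono) auto
qed simp

theorem proposition5p11:
  fixes E :: "nat \<Rightarrow> nat \<Rightarrow> nat \<Rightarrow> bool" and k :: nat and p q :: real
  assumes sym: "\<And>n u v. E n u v = E n v u"
    and irrefl: "\<And>n u. \<not> E n u u"
    and deg: "(\<lambda>n. ln (real n)) \<in> o(\<lambda>n. real (min_degree E n))"
    and k: "odd k" "k \<ge> 3"
    and q: "1/2 < q" "q \<le> 1"
    and p: "0 \<le> p" "p < pstar_q k q"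
    and qmu: "mu p k < q"
    and gamma: "\<gamma> > 0" and K: "(K::real) > 0"
  shows "(\<lambda>n. measure_pmf.prob (em_traj E n k p q (nat \<lfloor>real n powr K\<rfloor>))
            {xs. \<forall>t \<le> nat \<lfloor>real n powr K\<rfloor>. \<forall>v \<in> {1..n}.
                   \<bar>phi E n (xs ! t) v - (F p k ^^ t) q\<bar> \<le> \<gamma>})
         \<longlonglongrightarrow> 1"
proof -
  \<comment> \<open>Only the degrees of the graphs enter the argument.\<close>
  define m where "m = (k + 1) div 2"
  have m: "m \<ge> 2" "k = 2*m-1"
    using k by (auto simp: m_def elim!: oddE)
  have "p < majority_pstar m"
    using p pstar_q_le_majority_pstar[OF m q] by linarith
  with m p(1) interpret noise_below_threshold m k p
    by unfold_locales
  obtain c L \<epsilon> where lip: "c < 1" "c-lipschitz_on {L..1} (F p k)" and \<epsilon>: "0 < \<epsilon>"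
    and orbit: "\<And>t. L + \<epsilon> \<le> (F p k ^^ t) q"
    using orbit_in_contraction_region[OF qmu q(2)] by blast
  have "L + min \<gamma> \<epsilon> \<le> (F p k ^^ t) q" for t
    using orbit[of t] by linarith
  then have "(\<lambda>n. measure_pmf.prob (em_traj E n k p q (nat \<lfloor>real n powr K\<rfloor>))
      {xs. trajectory_close E n k p q (min \<gamma> \<epsilon>) (nat \<lfloor>real n powr K\<rfloor>) xs}) \<longlonglongrightarrow> 1"
    using p_less_half p(1) q \<epsilon> gamma
    by (intro tendsto_prob_trajectory_close[OF deg K _ _ _ _ lip(2,1)]) simp_all
  then show ?thesis
    by (rule prob_tendsto_1_mono) (auto simp: trajectory_close_def)
qed

end
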